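(* Let $\mathcal M=(\mathbf M^{(\lambda)})_{\lambda>0}$ be a weight matrix on $\mathbb N_0^d$. (Beurling) Assume (B1): for every $\lambda>0$ there exist $0<\kappa\le\lambda$ and $H>0$ such that for every $C>0$ there is $B>0$ with $\alpha^{\alpha/2}M^{(\kappa)}_\beta\le BC^{|\alpha|}H^{|\alpha+\beta|}M^{(\lambda)}_{\alpha+\beta}$ for all $\alpha,\beta$; and (B2): for every $\lambda>0$ there exist $0<\kappa\le\lambda$, $A\ge1$ with $M^{(\kappa)}_{\alpha+e_j}\le A^{|\alpha|+1}M^{(\lambda)}_\alpha$ for all $\alpha$ and $1\le j\le d$. Then: - there exists $C_1>0$ such that for all $\lambda,h>0$ there exist $\kappa>0$ and $\tilde h>0$ with $\|f\|_{2,\mathbf M^{(\lambda)},h}\le C_1\|f\|_{\infty,\mathbf M^{(\kappa)},\tilde h}$ for all $f\in C^\infty(\mathbb R^d)$; - for all $\lambda,h>0$ there exist $\tilde\kappa>0$, $C_{\lambda,h}>0$, $\tilde h>0$ with $\|f\|_{\infty,\mathbf M^{(\lambda)},h}\le C_{\lambda,h}\|f\|_{2,\mathbf M^{(\tilde\kappa)},\tilde h}$ for all $f\in C^\infty(\mathbb R^d)$. (Roumieu) Assume (R1): for every $\lambda>0$ there exist $\kappa\ge\lambda$ and $B,C,H>0$ with $\alpha^{\alpha/2}M^{(\lambda)}_\beta\le BC^{|\alpha|}H^{|\alpha+\beta|}M^{(\kappa)}_{\alpha+\beta}$ for all $\alpha,\beta$; and (R2): for every $\lambda>0$ there exist $\kappa\ge\lambda$,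 $A\ge1$ with $M^{(\lambda)}_{\alpha+e_j}\le A^{|\alpha|+1}M^{(\kappa)}_\alpha$ for all $\alpha$ and $1\le j\le d$. Then: - for all $\lambda,h>0$ there exist $C_{\lambda,h}>0$, $\kappa\ge\lambda$, $\tilde h>0$ with $\|f\|_{2,\mathbf M^{(\kappa)},\tilde h}\le C_{\lambda,h}\|f\|_{\infty,\mathbf M^{(\lambda)},h}$ for all $f\in C^\infty(\mathbb R^d)$; - for all $\lambda,h>0$ there exist $C_{\lambda,h}>0$, $\tilde\kappa>0$, $\tilde h>0$ with $\|f\|_{\infty,\mathbf M^{(\tilde\kappa)},\tilde h}\le C_{\lambda,h}\|f\|_{2,\mathbf M^{(\lambda)},h}$ for all $f\in C^\infty(\mathbb R^d)$. In particular, the systems of seminorms $\{\|\cdot\|_{\infty,\mathbf M^{(\lambda)},h}\}$ and $\{\|\cdot\|_{2,\mathbf M^{(\lambda)},h}\}$ are equivalent on $\mathcal S_{(\mathcal M)}$ in the Beurling case and on $\mathcal S_{\{\mathcal M\}}$ in the Roumieu case.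
   Context: A weight matrix is a family $\mathcal M=(\mathbf M^{(\lambda)})_{\lambda>0}$ with $\mathbf M^{(\lambda)}=(M^{(\lambda)}_\alpha)_{\alpha\in\mathbb N_0^d}$ sequences of positive reals, $M^{(\lambda)}_0=1$, and $M^{(\lambda)}_\alpha\le M^{(\kappa)}_\alpha$ for all $\alpha$ whenever $0<\lambda\le\kappa$. Notation: $|\alpha|=\sum\alpha_j$, $e_j$ the $j$-th unit vector, $\alpha^{\alpha/2}=\prod_j\alpha_j^{\alpha_j/2}$ with $0^0=1$. For a sequence $\mathbf M$ and $h>0$: $\|f\|_{\infty,\mathbf M,h}:=\sup_{\alpha,\beta\in\mathbb N_0^d}\frac{\|x^\alpha\partial^\beta f\|_\infty}{h^{|\alpha+\beta|}M_{\alpha+\beta}}$ and $\|f\|_{2,\mathbf M,h}:=\sup_{\alpha,\beta\in\mathbb N_0^d}\frac{\|x^\alpha\partial^\beta f\|_{L^2}}{h^{|\alpha+\beta|}M_{\alpha+\beta}}$ (values in $[0,+\infty]$). $\mathcal S_{\{\mathcal M\}}$ ($\mathcal S_{(\mathcal M)}$) is the set of $f\in C^\infty(\mathbb R^d)$ with $\|f\|_{\infty,\mathbf M^{(\lambda)},h}<\infty$ for some (for all) $\lambda,h>0$. *)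

theory Defs
  imports "HOL-Analysis.Analysis"
begin

text \<open>Multi-indices in N_0^d are functions 'n => nat, where the finite type 'n
  indexes the coordinates of R^d = real^'n.\<close>

definition mabs :: "('n::finite \<Rightarrow> nat) \<Rightarrow> nat" where
  "mabs \<alpha> = (\<Sum>i\<in>UNIV. \<alpha> i)"

definition madd :: "('n \<Rightarrow> nat) \<Rightarrow> ('n \<Rightarrow> nat) \<Rightarrow> ('n \<Rightarrow> nat)" where
  "madd \<alpha> \<beta> = (\<lambda>i. \<alpha> i + \<beta> i)"

definition unit_mi :: "'n \<Rightarrow> ('n \<Rightarrow> nat)" where
  "unit_mi j = (\<lambda>i. if i = j then 1 else 0)"

text \<open>alpha^(alpha/2) = prod_j alpha_j^(alpha_j/2), with 0^0 = 1.\<close>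
definition mi_halfpow :: "('n::finite \<Rightarrow> nat) \<Rightarrow> real" where
  "mi_halfpow \<alpha> = (\<Prod>i\<in>UNIV. sqrt (real (\<alpha> i ^ \<alpha> i)))"

definition monom_mi :: "('n::finite \<Rightarrow> nat) \<Rightarrow> real^'n \<Rightarrow> real" where
  "monom_mi \<alpha> x = (\<Prod>i\<in>UNIV. (x $ i) ^ \<alpha> i)"

definition pdir :: "'n::finite \<Rightarrow> (real^'n \<Rightarrow> complex) \<Rightarrow> real^'n \<Rightarrow> complex" where
  "pdir j f x = vector_derivative (\<lambda>t. f (x + t *\<^sub>R axis j 1)) (at 0)"

primrec pdirs :: "'n::finite list \<Rightarrow> (real^'n \<Rightarrow> complex) \<Rightarrow> real^'n \<Rightarrow> complex" where
  "pdirs [] f = f"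
| "pdirs (j # js) f = pdir j (pdirs js f)"

definition smooth :: "(real^'n::finite \<Rightarrow> complex) \<Rightarrow> bool" where
  "smooth f \<longleftrightarrow>
     (\<forall>js. continuous_on UNIV (pdirs js f)) \<and>
     (\<forall>js j x. (\<lambda>t. pdirs js f (x + t *\<^sub>R axis j 1)) differentiable (at (0::real)))"

text \<open>partial^beta f: differentiate beta_j times in direction j (for smooth f the
  order is irrelevant by Schwarz's theorem).\<close>
definition mpderiv :: "('n::finite \<Rightarrow> nat) \<Rightarrow> (real^'n \<Rightarrow> complex) \<Rightarrow> real^'n \<Rightarrow> complex" where
  "mpderiv \<beta> f = pdirs (SOME js. \<forall>i. count_list js i = \<beta> i) f"

definition sup_norm :: "(real^'n::finite \<Rightarrow> complex) \<Rightarrow> ennreal" where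
  "sup_norm g = (SUP x. ennreal (norm (g x)))"

definition L2_norm :: "(real^'n::finite \<Rightarrow> complex) \<Rightarrow> ennreal" where
  "L2_norm g = (let s = (\<integral>\<^sup>+ x. ennreal ((norm (g x))\<^sup>2) \<partial>lborel)
                in if s = \<infinity> then \<infinity> else ennreal (sqrt (enn2real s)))"

definition wnorm_inf :: "(('n::finite \<Rightarrow> nat) \<Rightarrow> real) \<Rightarrow> real \<Rightarrow> (real^'n \<Rightarrow> complex) \<Rightarrow> ennreal" where
  "wnorm_inf M h f = (SUP \<alpha>. SUP \<beta>.
      sup_norm (\<lambda>x. complex_of_real (monom_mi \<alpha> x) * mpderiv \<beta> f x)
      * ennreal (1 / (h ^ mabs (madd \<alpha> \<beta>) * M (madd \<alpha> \<beta>))))"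

definition wnorm_2 :: "(('n::finite \<Rightarrow> nat) \<Rightarrow> real) \<Rightarrow> real \<Rightarrow> (real^'n \<Rightarrow> complex) \<Rightarrow> ennreal" where
  "wnorm_2 M h f = (SUP \<alpha>. SUP \<beta>.
      L2_norm (\<lambda>x. complex_of_real (monom_mi \<alpha> x) * mpderiv \<beta> f x)
      * ennreal (1 / (h ^ mabs (madd \<alpha> \<beta>) * M (madd \<alpha> \<beta>))))"

text \<open>Weight matrix: M l is the sequence M^(l), for l > 0.\<close>
definition weight_matrix :: "(real \<Rightarrow> ('n::finite \<Rightarrow> nat) \<Rightarrow> real) \<Rightarrow> bool" where
  "weight_matrix M \<longleftrightarrow>
     (\<forall>l>0. (\<forall>\<alpha>. M l \<alpha> > 0) \<and> M l (\<lambda>_. 0) = 1) \<and>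
     (\<forall>l k \<alpha>. 0 < l \<longrightarrow> l \<le> k \<longrightarrow> M l \<alpha> \<le> M k \<alpha>)"

end

(* Only the shift conditions (B2) and (R2) are needed.

   L2 from sup: the factor prod_i max(1, x_i^2) equals x^eps(x) for a multi-index eps(x) of
   length at most 2d, so |x^alpha d^beta f(x)| prod_i max(1, x_i^2) is bounded by a sup-term of
   index alpha + eps(x) + beta, while prod_i 1/max(1, x_i^2) has integral at most 4^d.

   Sup from L2: on a unit cube Q with a vertex at x, |g x|^2 <= 2^d sum_beta int_Q |d^beta g|^2
   with beta ranging over the 0-1 multi-indices, by the fundamental theorem of calculus in one
   coordinate after the other.  Choosing Q on the side of x away from the coordinate hyperplanes
   gives |x^alpha| <= |z^alpha| on Q, so the weight x^alpha moves under the integral.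

   In both directions the extra order, at most 2d, is absorbed by iterating the shift condition:
   M_(gamma + c) <= A^(|gamma| + 1) M'_gamma for |c| <= 2d, and the factor A^|gamma| goes into h. *)

theory Submission
  imports Defs
begin

section \<open>Partial derivatives of smooth functions\<close>

lemma norm_diff_le_vector_derivative_bound:
  fixes F :: "real \<Rightarrow> 'a::real_normed_vector"
  assumes F: "\<And>t. (F has_vector_derivative F' t) (at t)"
    and B: "\<And>t. t \<in> closed_segment a b \<Longrightarrow> norm (F' t) \<le> B"
  shows "norm (F b - F a) \<le> B * \<bar>b - a\<bar>"
proof -
  have "norm (F b - F a) \<le> B * norm (b - a)"
  proof (rule differentiable_bound[OF convex_closed_segment])
    fix t assume t: "t \<in> closed_segment a b"
    show "(F has_derivative (\<lambda>h. h *\<^sub>R F' t)) (at t within closed_segment a b)"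
      using F has_vector_derivative_def has_vector_derivative_at_within by blast
    show "onorm (\<lambda>h. h *\<^sub>R F' t) \<le> B"
      using B[OF t] by (simp add: onorm_scaleR_left onorm_id)
  qed auto
  then show ?thesis by simp
qed

lemma pdirs_append: "pdirs (js @ ks) f = pdirs js (pdirs ks f)"
  by (induction js) auto

lemma smooth_pdirs: "smooth f \<Longrightarrow> smooth (pdirs ks f)"
  unfolding smooth_def by (simp add: pdirs_append[symmetric])

lemma smooth_pdir: "smooth f \<Longrightarrow> smooth (pdir j f)"
  using smooth_pdirs[of f "[j]"] by simp

lemma smooth_imp_continuous_on: "smooth f \<Longrightarrow> continuous_on UNIV f"
  unfolding smooth_def by (metis pdirs.simps(1))

lemma has_vector_derivative_pdir:
  assumes "smooth g"
  shows "((\<lambda>t. g (y + t *\<^sub>R axis j 1)) has_vector_derivative pdir j g (y + t0 *\<^sub>R axis j 1)) (at t0)"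
proof -
  let ?y = "y + t0 *\<^sub>R axis j 1"
  have "(\<lambda>t. g (?y + t *\<^sub>R axis j 1)) differentiable (at 0)"
    using assms unfolding smooth_def by (metis pdirs.simps(1))
  then have d: "((\<lambda>t. g (?y + t *\<^sub>R axis j 1)) has_vector_derivative pdir j g ?y) (at ((\<lambda>t. t - t0) t0))"
    unfolding pdir_def by (simp add: vector_derivative_works[symmetric])
  have "((\<lambda>t. t - t0) has_vector_derivative 1) (at t0)"
    by (auto intro!: derivative_eq_intros)
  from vector_diff_chain_at[OF this d]
  have "((\<lambda>t. g (?y + (t - t0) *\<^sub>R axis j 1)) has_vector_derivative pdir j g ?y) (at t0)"
    by (simp add: o_def)
  moreover have "(\<lambda>t. g (?y + (t - t0) *\<^sub>R axis j 1)) = (\<lambda>t. g (y + t *\<^sub>R axis j 1))"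
    by (auto simp: algebra_simps)
  ultimately show ?thesis by simp
qed

lemma has_vector_derivative_scaleR_const: "((\<lambda>s. s *\<^sub>R v) has_vector_derivative v) (at x)"
  by (auto intro!: derivative_eq_intros)

lemma second_difference_approx:
  assumes h: "smooth h"
    and B: "\<And>\<sigma> \<tau>. \<sigma> \<in> closed_segment 0 s \<Longrightarrow> \<tau> \<in> closed_segment 0 t \<Longrightarrow>
      norm (pdir j (pdir i h) (x + \<sigma> *\<^sub>R axis i 1 + \<tau> *\<^sub>R axis j 1) - c) \<le> \<epsilon>"
  shows "norm (h (x + s *\<^sub>R axis i 1 + t *\<^sub>R axis j 1) - h (x + s *\<^sub>R axis i 1)
              - h (x + t *\<^sub>R axis j 1) + h x - (s * t) *\<^sub>R c) \<le> \<epsilon> * \<bar>t\<bar> * \<bar>s\<bar>"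
proof -
  have hi: "smooth (pdir i h)" using h by (rule smooth_pdir)
  have inner: "norm (pdir i h (x + \<sigma> *\<^sub>R axis i 1 + t *\<^sub>R axis j 1) - pdir i h (x + \<sigma> *\<^sub>R axis i 1) - t *\<^sub>R c)
      \<le> \<epsilon> * \<bar>t\<bar>" if \<sigma>: "\<sigma> \<in> closed_segment 0 s" for \<sigma>
  proof -
    let ?F = "\<lambda>\<tau>. pdir i h (x + \<sigma> *\<^sub>R axis i 1 + \<tau> *\<^sub>R axis j 1) - \<tau> *\<^sub>R c"
    have "norm (?F t - ?F 0) \<le> \<epsilon> * \<bar>t - 0\<bar>"
    proof (rule norm_diff_le_vector_derivative_bound)
      fix \<tau>
      have "((\<lambda>t. pdir i h ((x + \<sigma> *\<^sub>R axis i 1) + t *\<^sub>R axis j 1)) has_vector_derivative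
          pdir j (pdir i h) ((x + \<sigma> *\<^sub>R axis i 1) + \<tau> *\<^sub>R axis j 1)) (at \<tau>)"
        by (rule has_vector_derivative_pdir[OF hi])
      then show "(?F has_vector_derivative (pdir j (pdir i h) (x + \<sigma> *\<^sub>R axis i 1 + \<tau> *\<^sub>R axis j 1) - c)) (at \<tau>)"
        by (rule has_vector_derivative_diff[OF _ has_vector_derivative_scaleR_const])
    next
      fix \<tau> assume "\<tau> \<in> closed_segment 0 t"
      then show "norm (pdir j (pdir i h) (x + \<sigma> *\<^sub>R axis i 1 + \<tau> *\<^sub>R axis j 1) - c) \<le> \<epsilon>"
        using B \<sigma> by blast
    qed
    then show ?thesis by (simp add: algebra_simps)
  qed
  let ?G = "\<lambda>\<sigma>. h ((x + t *\<^sub>R axis j 1) + \<sigma> *\<^sub>R axis i 1) - h (x + \<sigma> *\<^sub>R axis i 1) - \<sigma> *\<^sub>R (t *\<^sub>R c)"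
  have "norm (?G s - ?G 0) \<le> (\<epsilon> * \<bar>t\<bar>) * \<bar>s - 0\<bar>"
  proof (rule norm_diff_le_vector_derivative_bound)
    fix \<sigma>
    show "(?G has_vector_derivative (pdir i h (x + t *\<^sub>R axis j 1 + \<sigma> *\<^sub>R axis i 1)
        - pdir i h (x + \<sigma> *\<^sub>R axis i 1) - t *\<^sub>R c)) (at \<sigma>)"
      by (intro has_vector_derivative_diff has_vector_derivative_pdir[OF h]
          has_vector_derivative_scaleR_const)
  next
    fix \<sigma> assume "\<sigma> \<in> closed_segment 0 s"
    from inner[OF this]
    show "norm (pdir i h (x + t *\<^sub>R axis j 1 + \<sigma> *\<^sub>R axis i 1) - pdir i h (x + \<sigma> *\<^sub>R axis i 1) - t *\<^sub>R c) \<le> \<epsilon> * \<bar>t\<bar>"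
      by (simp add: algebra_simps)
  qed
  then show ?thesis by (simp add: algebra_simps)
qed

lemma second_difference_approx_near:
  assumes h: "smooth h" and \<epsilon>: "0 < \<epsilon>"
  obtains d where "0 < d" "\<And>s. 0 < s \<Longrightarrow> s < d \<Longrightarrow>
    norm (h (x + s *\<^sub>R axis i 1 + s *\<^sub>R axis j 1) - h (x + s *\<^sub>R axis i 1) - h (x + s *\<^sub>R axis j 1) + h x
      - (s * s) *\<^sub>R pdir j (pdir i h) x) \<le> \<epsilon> * s * s"
proof -
  have "continuous_on UNIV (pdir j (pdir i h))"
    using h unfolding smooth_def by (metis pdirs.simps)
  then obtain d where d: "0 < d" "\<And>z. dist z x < d \<Longrightarrow> dist (pdir j (pdir i h) z) (pdir j (pdir i h) x) < \<epsilon>"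
    using \<epsilon> unfolding continuous_on_iff by blast
  show thesis
  proof (rule that[of "d / 2"])
    fix s :: real assume s: "0 < s" "s < d / 2"
    have "norm (h (x + s *\<^sub>R axis i 1 + s *\<^sub>R axis j 1) - h (x + s *\<^sub>R axis i 1) - h (x + s *\<^sub>R axis j 1) + h x
        - (s * s) *\<^sub>R pdir j (pdir i h) x) \<le> \<epsilon> * \<bar>s\<bar> * \<bar>s\<bar>"
    proof (rule second_difference_approx[OF h])
      fix \<sigma> \<tau> assume "\<sigma> \<in> closed_segment 0 s" "\<tau> \<in> closed_segment 0 s"
      then have "\<bar>\<sigma>\<bar> \<le> s" "\<bar>\<tau>\<bar> \<le> s" using s by (auto simp: closed_segment_eq_real_ivl)
      moreover have "norm (\<sigma> *\<^sub>R axis i (1::real) + \<tau> *\<^sub>R axis j 1) \<le> \<bar>\<sigma>\<bar> + \<bar>\<tau>\<bar>"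
        using norm_triangle_ineq[of "\<sigma> *\<^sub>R axis i (1::real)" "\<tau> *\<^sub>R axis j 1"] by simp
      ultimately have "dist (x + \<sigma> *\<^sub>R axis i 1 + \<tau> *\<^sub>R axis j 1) x < d"
        using s by (simp add: dist_norm add.assoc)
      then show "norm (pdir j (pdir i h) (x + \<sigma> *\<^sub>R axis i 1 + \<tau> *\<^sub>R axis j 1) - pdir j (pdir i h) x) \<le> \<epsilon>"
        using d(2) by (simp add: dist_norm less_imp_le)
    qed
    then show "norm (h (x + s *\<^sub>R axis i 1 + s *\<^sub>R axis j 1) - h (x + s *\<^sub>R axis i 1) - h (x + s *\<^sub>R axis j 1)
        + h x - (s * s) *\<^sub>R pdir j (pdir i h) x) \<le> \<epsilon> * s * s"
      using s by simp
  qed (use d in simp)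
qed

text \<open>Schwarz's theorem: both mixed derivatives approximate the same second difference.\<close>
lemma pdir_commute:
  assumes h: "smooth h"
  shows "pdir j (pdir i h) x = pdir i (pdir j h) x"
proof (rule ccontr)
  let ?c1 = "pdir j (pdir i h) x" and ?c2 = "pdir i (pdir j h) x"
  assume "?c1 \<noteq> ?c2"
  then have \<epsilon>: "0 < norm (?c1 - ?c2) / 4" by simp
  obtain d1 where d1: "0 < d1" "\<And>s. 0 < s \<Longrightarrow> s < d1 \<Longrightarrow>
      norm (h (x + s *\<^sub>R axis i 1 + s *\<^sub>R axis j 1) - h (x + s *\<^sub>R axis i 1) - h (x + s *\<^sub>R axis j 1) + h x
        - (s * s) *\<^sub>R ?c1) \<le> norm (?c1 - ?c2) / 4 * s * s"
    using second_difference_approx_near[OF h \<epsilon>] by blast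
  obtain d2 where d2: "0 < d2" "\<And>s. 0 < s \<Longrightarrow> s < d2 \<Longrightarrow>
      norm (h (x + s *\<^sub>R axis j 1 + s *\<^sub>R axis i 1) - h (x + s *\<^sub>R axis j 1) - h (x + s *\<^sub>R axis i 1) + h x
        - (s * s) *\<^sub>R ?c2) \<le> norm (?c1 - ?c2) / 4 * s * s"
    using second_difference_approx_near[OF h \<epsilon>] by blast
  define s where "s = min d1 d2 / 2"
  have s: "0 < s" "s < d1" "s < d2" using d1 d2 by (auto simp: s_def)
  let ?D = "h (x + s *\<^sub>R axis i 1 + s *\<^sub>R axis j 1) - h (x + s *\<^sub>R axis i 1) - h (x + s *\<^sub>R axis j 1) + h x"
  have A: "norm (?D - (s * s) *\<^sub>R ?c1) \<le> norm (?c1 - ?c2) / 4 * s * s"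
    using d1(2)[OF s(1,2)] .
  have B: "norm (?D - (s * s) *\<^sub>R ?c2) \<le> norm (?c1 - ?c2) / 4 * s * s"
    using d2(2)[OF s(1,3)] by (simp add: algebra_simps)
  have "(s * s) *\<^sub>R (?c1 - ?c2) = (?D - (s * s) *\<^sub>R ?c2) - (?D - (s * s) *\<^sub>R ?c1)"
    by (simp add: algebra_simps)
  then have "norm ((s * s) *\<^sub>R (?c1 - ?c2)) \<le> norm (?D - (s * s) *\<^sub>R ?c2) + norm (?D - (s * s) *\<^sub>R ?c1)"
    by (metis norm_triangle_ineq4)
  also have "\<dots> \<le> norm (?c1 - ?c2) / 4 * s * s + norm (?c1 - ?c2) / 4 * s * s"
    using B A by (rule add_mono)
  also have "\<dots> = (s * s) * (norm (?c1 - ?c2) / 2)" by (simp add: algebra_simps)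
  finally have "(s * s) * norm (?c1 - ?c2) \<le> (s * s) * (norm (?c1 - ?c2) / 2)"
    using s(1) by simp
  then have "norm (?c1 - ?c2) \<le> norm (?c1 - ?c2) / 2"
    using s(1) by (simp add: mult_le_cancel_left_pos)
  with \<epsilon> show False by simp
qed

lemma pdirs_pdir_commute:
  assumes "smooth g"
  shows "pdirs ks (pdir a g) = pdir a (pdirs ks g)"
proof (induction ks)
  case (Cons k ks)
  have "pdirs (k # ks) (pdir a g) = pdir k (pdir a (pdirs ks g))"
    using Cons by simp
  also have "\<dots> = pdir a (pdir k (pdirs ks g))"
    using pdir_commute[OF smooth_pdirs[OF assms]] by (rule ext)
  finally show ?case by simp
qed simp

lemma pdirs_eq_if_count_list_eq:
  assumes "smooth g" "\<forall>i. count_list js i = count_list ks i"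
  shows "pdirs js g = pdirs ks g"
  using assms(2)
proof (induction js arbitrary: ks)
  case Nil
  then have "ks = []" by (cases ks) (auto dest: spec[of _ "hd ks"])
  then show ?case by simp
next
  case (Cons a js)
  then have "a \<in> set ks" using count_list_0_iff[of ks a] by (auto dest: spec[of _ a])
  then obtain ks1 ks2 where ks: "ks = ks1 @ a # ks2" by (meson split_list)
  have "\<forall>i. count_list js i = count_list (ks1 @ ks2) i"
  proof
    fix i show "count_list js i = count_list (ks1 @ ks2) i"
      using Cons.prems[rule_format, of i] ks by (cases "a = i") simp_all
  qed
  then have "pdirs js g = pdirs (ks1 @ ks2) g" by (rule Cons.IH)
  then show ?case
    using ks pdirs_pdir_commute[OF smooth_pdirs[OF assms(1)]] by (simp add: pdirs_append)
qed

lemma ex_count_list_eq: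
  fixes \<beta> :: "'n::finite \<Rightarrow> nat"
  shows "\<exists>js. \<forall>i. count_list js i = \<beta> i"
proof -
  obtain js where "mset js = Abs_multiset \<beta>" using ex_mset by blast
  then show ?thesis by (metis count_mset finite count_Abs_multiset)
qed

lemma mpderiv_eq_pdirs:
  assumes "smooth f" "\<forall>i. count_list js i = \<beta> i"
  shows "mpderiv \<beta> f = pdirs js f"
  unfolding mpderiv_def
  using pdirs_eq_if_count_list_eq[OF assms(1)] someI_ex[OF ex_count_list_eq[of \<beta>]] assms(2)
  by simp

lemma pdirs_mpderiv:
  assumes "smooth f"
  shows "pdirs js (mpderiv \<beta> f) = mpderiv (madd \<beta> (count_list js)) f"
proof -
  obtain ks where ks: "\<forall>i. count_list ks i = \<beta> i" using ex_count_list_eq by blast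
  have "pdirs js (mpderiv \<beta> f) = pdirs (js @ ks) f"
    using mpderiv_eq_pdirs[OF assms ks] by (simp add: pdirs_append)
  also have "\<dots> = mpderiv (madd \<beta> (count_list js)) f"
    by (rule mpderiv_eq_pdirs[OF assms, symmetric]) (simp add: ks madd_def)
  finally show ?thesis .
qed

lemma smooth_mpderiv: "smooth f \<Longrightarrow> smooth (mpderiv \<beta> f)"
  unfolding mpderiv_def by (rule smooth_pdirs)
section \<open>A Sobolev inequality on unit cubes\<close>

lemma norm_diff_le_integral_norm_derivative:
  fixes \<phi> \<phi>' :: "real \<Rightarrow> 'a::euclidean_space"
  assumes D: "\<And>t. (\<phi> has_vector_derivative \<phi>' t) (at t)"
    and C: "continuous_on UNIV \<phi>'" and lu: "a \<le> l" "l \<le> u" "u \<le> b"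
  shows "norm (\<phi> u - \<phi> l) \<le> integral {a..b} (\<lambda>t. norm (\<phi>' t))"
proof -
  have cn': "continuous_on UNIV (\<lambda>t. norm (\<phi>' t))" using C by (intro continuous_intros)
  have int': "(\<lambda>t. norm (\<phi>' t)) integrable_on {l..u}" for l u
    by (rule integrable_continuous_interval) (rule continuous_on_subset[OF cn'], simp)
  have intp': "\<phi>' integrable_on {l..u}"
    by (rule integrable_continuous_interval) (rule continuous_on_subset[OF C], simp)
  have "(\<phi>' has_integral (\<phi> u - \<phi> l)) {l..u}"
    by (rule fundamental_theorem_of_calculus[OF \<open>l \<le> u\<close>])
       (auto intro: has_vector_derivative_at_within D)
  then have "\<phi> u - \<phi> l = integral {l..u} \<phi>'" by (simp add: integral_unique)
  then have "norm (\<phi> u - \<phi> l) \<le> integral {l..u} (\<lambda>t. norm (\<phi>' t))"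
    using integral_norm_bound_integral[OF intp' int'] by simp
  also have "\<dots> \<le> integral {a..b} (\<lambda>t. norm (\<phi>' t))"
    by (rule integral_subset_le) (use lu in \<open>auto intro: int'\<close>)
  finally show ?thesis .
qed

lemma norm_le_unit_interval_integrals:
  fixes \<phi> \<phi>' :: "real \<Rightarrow> 'a::euclidean_space"
  assumes D: "\<And>t. (\<phi> has_vector_derivative \<phi>' t) (at t)"
    and C: "continuous_on UNIV \<phi>'"
    and t0: "t0 \<in> {a..a + 1}"
  shows "norm (\<phi> t0) \<le> integral {a..a + 1} (\<lambda>t. norm (\<phi> t)) + integral {a..a + 1} (\<lambda>t. norm (\<phi>' t))"
proof -
  define K where "K = integral {a..a + 1} (\<lambda>t. norm (\<phi>' t))"
  have "continuous_on UNIV \<phi>"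
    using D by (meson continuous_at_imp_continuous_on has_vector_derivative_continuous)
  then have "continuous_on UNIV (\<lambda>t. norm (\<phi> t))" by (intro continuous_intros)
  then have intn: "(\<lambda>t. norm (\<phi> t)) integrable_on {a..a + 1}"
    by (rule integrable_continuous_interval[OF continuous_on_subset]) simp
  have key: "norm (\<phi> t0) \<le> norm (\<phi> s) + K" if s: "s \<in> {a..a + 1}" for s
  proof -
    have "norm (\<phi> t0 - \<phi> s) \<le> K"
    proof (cases "s \<le> t0")
      case True then show ?thesis
        using norm_diff_le_integral_norm_derivative[OF D C, of a s t0] s t0 by (auto simp: K_def)
    next
      case False then show ?thesis
        using norm_diff_le_integral_norm_derivative[OF D C, of a t0 s] s t0
        by (auto simp: K_def norm_minus_commute)
    qed
    then show ?thesis using norm_triangle_ineq2[of "\<phi> t0" "\<phi> s"] by linarith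
  qed
  have "integral {a..a + 1} (\<lambda>s. norm (\<phi> t0)) \<le> integral {a..a + 1} (\<lambda>s. norm (\<phi> s) + K)"
    by (rule integral_le) (auto intro: key integrable_add intn)
  also have "\<dots> = integral {a..a + 1} (\<lambda>s. norm (\<phi> s)) + K"
    using integral_add[OF intn integrable_const_ivl[of K a "a + 1"]] by simp
  finally show ?thesis by (simp add: K_def)
qed

text \<open>The previous lemma for \<open>g\<^sup>2\<close>, with \<open>|(g\<^sup>2)'| \<le> |g|\<^sup>2 + |g'|\<^sup>2\<close>.\<close>
lemma sq_norm_le_unit_interval_integral:
  fixes g g' :: "real \<Rightarrow> complex"
  assumes D: "\<And>t. (g has_vector_derivative g' t) (at t)"
    and C: "continuous_on UNIV g'" and c: "c \<le> 0" "0 \<le> c + 1"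
  shows "ennreal ((norm (g 0))\<^sup>2) \<le>
    (\<integral>\<^sup>+ t. ennreal (2 * (norm (g t))\<^sup>2 + (norm (g' t))\<^sup>2) * indicator {c..c+1} t \<partial>lborel)"
proof -
  have cg: "continuous_on UNIV g"
    using D by (meson continuous_at_imp_continuous_on has_vector_derivative_continuous)
  have D2: "((\<lambda>t. g t * g t) has_vector_derivative (g t * g' t + g' t * g t)) (at t)" for t
    by (rule has_vector_derivative_mult[OF D D])
  have C2: "continuous_on UNIV (\<lambda>t. g t * g' t + g' t * g t)"
    using cg C by (intro continuous_intros)
  have f: "norm (g 0 * g 0) \<le> integral {c..c+1} (\<lambda>t. norm (g t * g t))
      + integral {c..c+1} (\<lambda>t. norm (g t * g' t + g' t * g t))"
    by (rule norm_le_unit_interval_integrals[OF D2 C2]) (use c in auto)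
  let ?F = "\<lambda>t. 2 * (norm (g t))\<^sup>2 + (norm (g' t))\<^sup>2"
  have cF: "continuous_on UNIV ?F" using cg C by (intro continuous_intros)
  have iF: "?F integrable_on {c..c+1}"
    by (rule integrable_continuous_interval) (rule continuous_on_subset[OF cF], simp)
  have i1: "(\<lambda>t. norm (g t * g t)) integrable_on {c..c+1}"
    by (rule integrable_continuous_interval) (intro continuous_intros continuous_on_subset[OF cg], simp_all)
  have i2: "(\<lambda>t. norm (g t * g' t + g' t * g t)) integrable_on {c..c+1}"
    by (rule integrable_continuous_interval) (intro continuous_intros continuous_on_subset[OF cg] continuous_on_subset[OF C], simp_all)
  have pt: "norm (g t * g t) + norm (g t * g' t + g' t * g t) \<le> ?F t" for t
  proof -
    have "norm (g t * g' t + g' t * g t) \<le> 2 * (norm (g t) * norm (g' t))"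
      by (metis mult.commute mult_2 norm_mult norm_triangle_ineq)
    moreover have "2 * (norm (g t) * norm (g' t)) \<le> (norm (g t))\<^sup>2 + (norm (g' t))\<^sup>2"
      using sum_squares_bound[of "norm (g t)" "norm (g' t)"] by (simp add: power2_eq_square)
    ultimately show ?thesis by (simp add: norm_mult power2_eq_square)
  qed
  have "integral {c..c+1} (\<lambda>t. norm (g t * g t)) + integral {c..c+1} (\<lambda>t. norm (g t * g' t + g' t * g t))
      = integral {c..c+1} (\<lambda>t. norm (g t * g t) + norm (g t * g' t + g' t * g t))"
    by (rule integral_add[OF i1 i2, symmetric])
  also have "\<dots> \<le> integral {c..c+1} ?F"
    by (rule integral_le[OF integrable_add[OF i1 i2] iF]) (rule pt)
  finally have le: "(norm (g 0))\<^sup>2 \<le> integral {c..c+1} ?F"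
    using f by (simp add: norm_mult power2_eq_square)
  have "(\<integral>\<^sup>+ t. ennreal (?F t) * indicator {c..c+1} t \<partial>lborel) = ennreal (integral {c..c+1} ?F)"
    by (rule nn_integral_has_integral_lebesgue') (auto intro: integrable_integral iF)
  then show ?thesis using le by (simp add: ennreal_leI)
qed

lemma measurable_affine_Basis_combination:
  fixes x :: "'a::euclidean_space"
  assumes "finite I"
  shows "(\<lambda>z. x + (\<Sum>b\<in>I. z b *\<^sub>R b)) \<in> borel_measurable (Pi\<^sub>M I (\<lambda>_. lborel))"
proof -
  have "(\<lambda>z. z b) \<in> borel_measurable (Pi\<^sub>M I (\<lambda>_. lborel))" if "b \<in> I" for b
    using measurable_component_singleton[OF that, of "\<lambda>_. lborel"] by simp
  then show ?thesis
    by (intro borel_measurable_add borel_measurable_const borel_measurable_sum borel_measurable_scaleR) auto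
qed

lemma measurable_indicator_sq_norm_affine:
  fixes x :: "'a::euclidean_space" and G :: "'a \<Rightarrow> complex"
  assumes "finite I" "continuous_on UNIV G" "\<And>b. b \<in> I \<Longrightarrow> J b \<in> sets lborel"
  shows "(\<lambda>z. indicator (Pi\<^sub>E I J) z * ennreal ((norm (G (x + (\<Sum>b\<in>I. z b *\<^sub>R b))))\<^sup>2))
     \<in> borel_measurable (Pi\<^sub>M I (\<lambda>_. lborel))"
proof -
  have G: "G \<in> borel_measurable borel" using assms(2) by (rule borel_measurable_continuous_onI)
  have "(\<lambda>z. G (x + (\<Sum>b\<in>I. z b *\<^sub>R b))) \<in> borel_measurable (Pi\<^sub>M I (\<lambda>_. lborel))"
    using measurable_compose[OF measurable_affine_Basis_combination[OF assms(1)] G] by (simp add: o_def)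
  moreover have "Pi\<^sub>E I J \<in> sets (Pi\<^sub>M I (\<lambda>_. lborel))"
    using assms(1,3) by (rule sets_PiM_I_finite)
  ultimately show ?thesis by measurable
qed

lemma indicator_PiE_insert_fun_upd:
  assumes "y \<in> space (Pi\<^sub>M I M)" "b \<notin> I"
  shows "indicator (Pi\<^sub>E (insert b I) J) (y(b := t)) = (indicator (Pi\<^sub>E I J) y * indicator (J b) t :: ennreal)"
  using assms by (auto simp: space_PiM PiE_def extensional_def Pi_def indicator_def split: if_splits)

lemma sum_insert_fun_upd_scaleR:
  fixes y :: "'a::euclidean_space \<Rightarrow> real"
  assumes "finite I" "b \<notin> I"
  shows "(\<Sum>c\<in>insert b I. (y(b := t)) c *\<^sub>R c) = t *\<^sub>R b + (\<Sum>c\<in>I. y c *\<^sub>R c)"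
proof -
  have "(\<Sum>c\<in>I. (y(b := t)) c *\<^sub>R c) = (\<Sum>c\<in>I. y c *\<^sub>R c)"
    using assms by (intro sum.cong) auto
  then show ?thesis using assms by simp
qed

text \<open>The cube \<open>{x + (\<Sum>b\<in>I. z b *\<^sub>R b) | z. \<forall>b\<in>I. z b \<in> {c b..c b + 1}}\<close> is parametrised by
  \<open>z \<in> \<real>\<^sup>I\<close>; for \<open>I = {}\<close> the integral is \<open>|G x|\<^sup>2\<close>.\<close>
definition cube_sq_integral :: "'a::euclidean_space set \<Rightarrow> ('a \<Rightarrow> real) \<Rightarrow> 'a \<Rightarrow> ('a \<Rightarrow> complex) \<Rightarrow> ennreal" where
  "cube_sq_integral I c x G = (\<integral>\<^sup>+ z. indicator (Pi\<^sub>E I (\<lambda>b. {c b..c b + 1})) z *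
     ennreal ((norm (G (x + (\<Sum>b\<in>I. z b *\<^sub>R b))))\<^sup>2) \<partial>Pi\<^sub>M I (\<lambda>_. lborel))"

lemma cube_sq_integral_empty: "cube_sq_integral {} c x G = ennreal ((norm (G x))\<^sup>2)"
proof -
  interpret product_sigma_finite "\<lambda>_::'a. lborel :: real measure" by standard
  show ?thesis unfolding cube_sq_integral_def by (subst nn_integral_empty) (auto simp: indicator_def)
qed

lemma cube_sq_integral_le_insert:
  fixes G :: "'a::euclidean_space \<Rightarrow> complex" and G' :: "'a \<Rightarrow> complex"
  assumes I: "finite I" "b \<notin> I"
    and cG: "continuous_on UNIV G" and cG': "continuous_on UNIV G'"
    and der: "\<And>y t. ((\<lambda>t. G (y + t *\<^sub>R b)) has_vector_derivative G' (y + t *\<^sub>R b)) (at t)"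
    and c: "c b \<le> 0" "0 \<le> c b + 1"
  shows "cube_sq_integral I c x G
    \<le> 2 * cube_sq_integral (insert b I) c x G + cube_sq_integral (insert b I) c x G'"
proof -
  interpret product_sigma_finite "\<lambda>_::'a. lborel :: real measure" by standard
  let ?p = "\<lambda>y. x + (\<Sum>d\<in>I. y d *\<^sub>R d)"
  let ?q = "\<lambda>z. x + (\<Sum>d\<in>insert b I. z d *\<^sub>R d)"
  let ?Q = "Pi\<^sub>E I (\<lambda>b. {c b..c b + 1})" and ?Q' = "Pi\<^sub>E (insert b I) (\<lambda>b. {c b..c b + 1})"
  let ?f = "\<lambda>H z. indicator ?Q' z * ennreal ((norm (H (?q z)))\<^sup>2)"
  have mf: "?f H \<in> borel_measurable (Pi\<^sub>M (insert b I) (\<lambda>_. lborel))"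
    if "continuous_on UNIV H" for H :: "'a \<Rightarrow> complex"
    using I that by (intro measurable_indicator_sq_norm_affine) auto
  have slice: "indicator ?Q y * ennreal ((norm (G (?p y)))\<^sup>2)
      \<le> (\<integral>\<^sup>+ t. 2 * ?f G (y(b := t)) + ?f G' (y(b := t)) \<partial>lborel)"
    if y: "y \<in> space (Pi\<^sub>M I (\<lambda>_. lborel))" for y
  proof -
    let ?F = "\<lambda>t. 2 * (norm (G (?p y + t *\<^sub>R b)))\<^sup>2 + (norm (G' (?p y + t *\<^sub>R b)))\<^sup>2"
    have cc: "continuous_on UNIV (\<lambda>t. G' (?p y + t *\<^sub>R b))"
      by (rule continuous_on_compose2[OF cG']) (auto intro!: continuous_intros)
    have "ennreal ((norm (G (?p y + 0 *\<^sub>R b)))\<^sup>2) \<le>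
        (\<integral>\<^sup>+ t. ennreal (?F t) * indicator {c b..c b + 1} t \<partial>lborel)"
      by (rule sq_norm_le_unit_interval_integral[OF der cc c])
    then have "indicator ?Q y * ennreal ((norm (G (?p y)))\<^sup>2)
        \<le> indicator ?Q y * (\<integral>\<^sup>+ t. ennreal (?F t) * indicator {c b..c b + 1} t \<partial>lborel)"
      by (intro mult_left_mono) auto
    also have "\<dots> = (\<integral>\<^sup>+ t. indicator ?Q y * (ennreal (?F t) * indicator {c b..c b + 1} t) \<partial>lborel)"
    proof (rule nn_integral_cmult[symmetric])
      have "continuous_on UNIV ?F"
        by (intro continuous_intros continuous_on_compose2[OF cG] continuous_on_compose2[OF cG']) auto
      then have "?F \<in> borel_measurable borel"
        by (rule borel_measurable_continuous_onI)
      then show "(\<lambda>t. ennreal (?F t) * indicator {c b..c b + 1} t) \<in> borel_measurable lborel"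
        by measurable
    qed
    also have "\<dots> = (\<integral>\<^sup>+ t. 2 * ?f G (y(b := t)) + ?f G' (y(b := t)) \<partial>lborel)"
    proof (rule nn_integral_cong)
      fix t
      have "?q (y(b := t)) = ?p y + t *\<^sub>R b"
        using sum_insert_fun_upd_scaleR[OF I, of y t] by (simp add: algebra_simps)
      moreover have "indicator ?Q' (y(b := t)) = (indicator ?Q y * indicator {c b..c b + 1} t :: ennreal)"
        using indicator_PiE_insert_fun_upd[OF y I(2)] by simp
      ultimately show "indicator ?Q y * (ennreal (?F t) * indicator {c b..c b + 1} t)
          = 2 * ?f G (y(b := t)) + ?f G' (y(b := t))"
        by (simp add: ennreal_plus[symmetric] ennreal_mult' algebra_simps)
    qed
    finally show ?thesis .
  qed
  have "cube_sq_integral I c x G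
      \<le> (\<integral>\<^sup>+ y. (\<integral>\<^sup>+ t. 2 * ?f G (y(b := t)) + ?f G' (y(b := t)) \<partial>lborel) \<partial>Pi\<^sub>M I (\<lambda>_. lborel))"
    unfolding cube_sq_integral_def by (rule nn_integral_mono) (rule slice)
  also have "\<dots> = (\<integral>\<^sup>+ z. 2 * ?f G z + ?f G' z \<partial>Pi\<^sub>M (insert b I) (\<lambda>_. lborel))"
    by (rule product_nn_integral_insert[OF I, symmetric]) (use mf[OF cG] mf[OF cG'] in measurable)
  also have "\<dots> = 2 * cube_sq_integral (insert b I) c x G + cube_sq_integral (insert b I) c x G'"
    unfolding cube_sq_integral_def
    by (subst nn_integral_add) (use mf[OF cG] mf[OF cG'] in \<open>auto simp: nn_integral_cmult\<close>)
  finally show ?thesis .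
qed

definition distinct_lists :: "'a set \<Rightarrow> 'a list set" where
  "distinct_lists I = {bs. set bs \<subseteq> I \<and> distinct bs}"

lemma finite_distinct_lists: "finite I \<Longrightarrow> finite (distinct_lists I)"
  unfolding distinct_lists_def by (rule finite_subset_distinct)

text \<open>\<open>D b\<close> is differentiation along \<open>b\<close>; the distinct lists \<open>bs\<close> of directions in \<open>I\<close> index the
  derivatives \<open>foldr D bs g\<close> of order at most one in each direction.\<close>
lemma sq_norm_le_cube_sq_integrals:
  fixes F :: "('a::euclidean_space \<Rightarrow> complex) set" and D :: "'a \<Rightarrow> ('a \<Rightarrow> complex) \<Rightarrow> 'a \<Rightarrow> complex"
  assumes closed: "\<And>g b. g \<in> F \<Longrightarrow> b \<in> Basis \<Longrightarrow> D b g \<in> F"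
    and cont: "\<And>g. g \<in> F \<Longrightarrow> continuous_on UNIV g"
    and der: "\<And>g b y t. g \<in> F \<Longrightarrow> b \<in> Basis \<Longrightarrow>
         ((\<lambda>t. g (y + t *\<^sub>R b)) has_vector_derivative D b g (y + t *\<^sub>R b)) (at t)"
    and c: "\<And>b. c b \<le> 0 \<and> 0 \<le> c b + 1"
    and I: "finite I" "I \<subseteq> Basis" and g: "g \<in> F"
  shows "ennreal ((norm (g x))\<^sup>2) \<le> 2 ^ card I * (\<Sum>bs\<in>distinct_lists I. cube_sq_integral I c x (foldr D bs g))"
  using I
proof (induction I rule: finite_induct)
  case empty
  have "distinct_lists {} = {[]}" by (auto simp: distinct_lists_def)
  then show ?case unfolding \<open>distinct_lists {} = {[]}\<close> by (simp add: cube_sq_integral_empty)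
next
  case (insert b I)
  let ?I' = "insert b I"
  let ?S = "\<lambda>J bs. cube_sq_integral J c x (foldr D bs g)"
  have inF: "set bs \<subseteq> Basis \<Longrightarrow> foldr D bs g \<in> F" for bs
    by (induction bs) (auto intro: closed g)
  have step: "?S I bs \<le> 2 * (?S ?I' bs + ?S ?I' (b # bs))" if "bs \<in> distinct_lists I" for bs
  proof -
    have G: "foldr D bs g \<in> F" using that insert by (intro inF) (auto simp: distinct_lists_def)
    have b: "b \<in> Basis" using insert by auto
    have "?S I bs \<le> 2 * ?S ?I' bs + ?S ?I' (b # bs)"
      unfolding foldr.simps o_def
      by (rule cube_sq_integral_le_insert[OF insert(1,2) cont[OF G] cont[OF closed[OF G b]] der[OF G b]])
        (use c in auto)
    also have "\<dots> \<le> 2 * (?S ?I' bs + ?S ?I' (b # bs))"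
      by (simp add: distrib_left add_mono mult_2 add_increasing)
    finally show ?thesis .
  qed
  have disj: "distinct_lists I \<inter> (Cons b) ` distinct_lists I = {}"
    using insert by (auto simp: distinct_lists_def)
  have sub: "distinct_lists I \<union> (Cons b) ` distinct_lists I \<subseteq> distinct_lists ?I'"
    using insert by (auto simp: distinct_lists_def)
  have fin: "finite (distinct_lists I)" "finite (distinct_lists ?I')"
    using insert by (auto intro: finite_distinct_lists)
  have "ennreal ((norm (g x))\<^sup>2) \<le> 2 ^ card I * (\<Sum>bs\<in>distinct_lists I. ?S I bs)"
    using insert by auto
  also have "\<dots> \<le> 2 ^ card I * (\<Sum>bs\<in>distinct_lists I. 2 * (?S ?I' bs + ?S ?I' (b # bs)))"
    by (intro mult_left_mono sum_mono step) auto
  also have "\<dots> = 2 ^ card ?I' * ((\<Sum>bs\<in>distinct_lists I. ?S ?I' bs) + (\<Sum>bs\<in>distinct_lists I. ?S ?I' (b # bs)))"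
    using insert by (simp only: sum.distrib sum_distrib_left[symmetric]) (simp add: algebra_simps)
  also have "(\<Sum>bs\<in>distinct_lists I. ?S ?I' (b # bs)) = (\<Sum>bs\<in>Cons b ` distinct_lists I. ?S ?I' bs)"
    by (simp add: sum.reindex)
  also have "(\<Sum>bs\<in>distinct_lists I. ?S ?I' bs) + \<dots> = (\<Sum>bs\<in>distinct_lists I \<union> Cons b ` distinct_lists I. ?S ?I' bs)"
    using fin disj by (simp add: sum.union_disjoint)
  also have "\<dots> \<le> (\<Sum>bs\<in>distinct_lists ?I'. ?S ?I' bs)"
    by (rule sum_mono2[OF fin(2) sub]) simp
  finally show ?case by (simp add: mult_left_mono)
qed

lemma nn_integral_PiM_Basis_translate:
  fixes f :: "'a::euclidean_space \<Rightarrow> ennreal"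
  assumes f: "f \<in> borel_measurable borel"
  shows "(\<integral>\<^sup>+ y. f (x + (\<Sum>b\<in>Basis. y b *\<^sub>R b)) \<partial>Pi\<^sub>M Basis (\<lambda>_. lborel)) = (\<integral>\<^sup>+ z. f z \<partial>lborel)"
proof -
  have T: "(\<lambda>y. \<Sum>b\<in>Basis. y b *\<^sub>R b) \<in> measurable (Pi\<^sub>M Basis (\<lambda>_. lborel)) (borel :: 'a measure)"
    using measurable_affine_Basis_combination[of Basis 0] by simp
  have "(\<integral>\<^sup>+ z. f z \<partial>lborel) = (\<integral>\<^sup>+ z. f z \<partial>distr lborel borel ((+) x))"
    by (simp add: lborel_distr_plus)
  also have "\<dots> = (\<integral>\<^sup>+ z. f (x + z) \<partial>lborel)"
    by (rule nn_integral_distr) (use f in auto)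
  also have "\<dots> = (\<integral>\<^sup>+ z. f (x + z) \<partial>distr (Pi\<^sub>M Basis (\<lambda>_. lborel)) borel (\<lambda>y. \<Sum>b\<in>Basis. y b *\<^sub>R b))"
    by (subst lborel_eq) simp
  also have "\<dots> = (\<integral>\<^sup>+ y. f (x + (\<Sum>b\<in>Basis. y b *\<^sub>R b)) \<partial>Pi\<^sub>M Basis (\<lambda>_. lborel))"
    by (rule nn_integral_distr[OF T]) (use f in measurable)
  finally show ?thesis by simp
qed

lemma cube_sq_integral_le_nn_integral:
  fixes G H :: "'a::euclidean_space \<Rightarrow> complex"
  assumes cG: "continuous_on UNIV G" and cH: "continuous_on UNIV H" and w: "0 \<le> w"
    and le: "\<And>y. y \<in> Pi\<^sub>E Basis (\<lambda>b. {c b..c b + 1}) \<Longrightarrow>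
       w * (norm (G (x + (\<Sum>b\<in>Basis. y b *\<^sub>R b))))\<^sup>2 \<le> (norm (H (x + (\<Sum>b\<in>Basis. y b *\<^sub>R b))))\<^sup>2"
  shows "ennreal w * cube_sq_integral Basis c x G \<le> (\<integral>\<^sup>+ z. ennreal ((norm (H z))\<^sup>2) \<partial>lborel)"
proof -
  let ?Q = "Pi\<^sub>E Basis (\<lambda>b. {c b..c b + 1})" and ?p = "\<lambda>y. x + (\<Sum>b\<in>Basis. y b *\<^sub>R b)"
  have m: "(\<lambda>y. indicator ?Q y * ennreal ((norm (G (?p y)))\<^sup>2)) \<in> borel_measurable (Pi\<^sub>M Basis (\<lambda>_. lborel))"
    by (rule measurable_indicator_sq_norm_affine[OF _ cG]) auto
  have mH: "(\<lambda>z. ennreal ((norm (H z))\<^sup>2)) \<in> borel_measurable borel"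
    using borel_measurable_continuous_onI[OF cH] by measurable
  have "ennreal w * cube_sq_integral Basis c x G
      = (\<integral>\<^sup>+ y. ennreal w * (indicator ?Q y * ennreal ((norm (G (?p y)))\<^sup>2)) \<partial>Pi\<^sub>M Basis (\<lambda>_. lborel))"
    unfolding cube_sq_integral_def by (rule nn_integral_cmult[symmetric, OF m])
  also have "\<dots> \<le> (\<integral>\<^sup>+ y. ennreal ((norm (H (?p y)))\<^sup>2) \<partial>Pi\<^sub>M Basis (\<lambda>_. lborel))"
    using le w by (intro nn_integral_mono) (auto simp: indicator_def ennreal_mult[symmetric] ennreal_leI)
  also have "\<dots> = (\<integral>\<^sup>+ z. ennreal ((norm (H z))\<^sup>2) \<partial>lborel)"
    by (rule nn_integral_PiM_Basis_translate[OF mH])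
  finally show ?thesis .
qed

lemma sum_Basis_scaleR_nth:
  fixes y :: "real^'n \<Rightarrow> real"
  shows "(\<Sum>b\<in>Basis. y b *\<^sub>R b) $ i = y (axis i 1)"
proof -
  have "(\<Sum>b\<in>Basis. y b *\<^sub>R b) $ i = (\<Sum>b\<in>Basis. y b * (b \<bullet> axis i 1))"
    by (simp add: cart_eq_inner_axis inner_sum_left)
  also have "\<dots> = (\<Sum>b\<in>Basis. if b = axis i 1 then y b else 0)"
    by (intro sum.cong refl) (simp add: inner_Basis)
  finally show ?thesis by (simp add: sum.delta')
qed

lemma abs_monom_mi_mono:
  assumes "\<And>i. \<bar>x $ i\<bar> \<le> \<bar>p $ i\<bar>"
  shows "\<bar>monom_mi \<alpha> x\<bar> \<le> \<bar>monom_mi \<alpha> p\<bar>"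
  unfolding monom_mi_def abs_prod
  by (intro prod_mono) (auto simp: power_abs intro: power_mono assms)

lemma continuous_on_monom_mi: "continuous_on UNIV (monom_mi \<alpha>)"
  unfolding monom_mi_def by (intro continuous_intros)

lemma foldr_pdir_axis_index: "foldr (\<lambda>b. pdir (axis_index b)) bs g = pdirs (map axis_index bs) g"
  by (induction bs) auto

text \<open>The cube with vertex \<open>x\<close> is chosen to extend away from the coordinate hyperplanes, so that
  \<open>|x\<^sup>\<alpha>| \<le> |z\<^sup>\<alpha>|\<close> on it and the weight can be moved under the integral.\<close>
lemma sq_monom_mi_mult_cube_sq_integral_le:
  fixes G :: "real^'n \<Rightarrow> complex"
  assumes G: "continuous_on UNIV G" and c: "c = (\<lambda>b. if 0 \<le> x \<bullet> b then 0 else - 1)"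
  shows "ennreal ((monom_mi \<alpha> x)\<^sup>2) * cube_sq_integral Basis c x G \<le>
    (\<integral>\<^sup>+ z. ennreal ((norm (complex_of_real (monom_mi \<alpha> z) * G z))\<^sup>2) \<partial>lborel)"
proof (rule cube_sq_integral_le_nn_integral[OF G])
  show "continuous_on UNIV (\<lambda>z. complex_of_real (monom_mi \<alpha> z) * G z)"
    using G by (intro continuous_intros continuous_on_compose2[OF continuous_on_of_real continuous_on_monom_mi]) auto
next
  fix y assume y: "y \<in> Pi\<^sub>E Basis (\<lambda>b. {c b..c b + 1})"
  let ?p = "x + (\<Sum>b\<in>Basis. y b *\<^sub>R b)"
  have "\<bar>x $ i\<bar> \<le> \<bar>?p $ i\<bar>" for i
  proof -
    have "y (axis i 1) \<in> {c (axis i 1)..c (axis i 1) + 1}" using y by (auto simp: PiE_def Pi_def)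
    then show ?thesis using sum_Basis_scaleR_nth[of y i] by (auto simp: c inner_axis split: if_splits)
  qed
  then have "\<bar>monom_mi \<alpha> x\<bar> \<le> \<bar>monom_mi \<alpha> ?p\<bar>" by (rule abs_monom_mi_mono)
  then have "(monom_mi \<alpha> x)\<^sup>2 \<le> (monom_mi \<alpha> ?p)\<^sup>2"
    by (metis abs_ge_zero power2_abs power_mono)
  then show "(monom_mi \<alpha> x)\<^sup>2 * (norm (G ?p))\<^sup>2 \<le> (norm (complex_of_real (monom_mi \<alpha> ?p) * G ?p))\<^sup>2"
    by (simp add: norm_mult power_mult_distrib mult_right_mono)
qed simp

lemma sq_norm_monom_mpderiv_le:
  fixes f :: "real^'n \<Rightarrow> complex"
  assumes f: "smooth f"
  shows "ennreal ((norm (complex_of_real (monom_mi \<alpha> x) * mpderiv \<beta> f x))\<^sup>2) \<le>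
    2 ^ CARD('n) * (\<Sum>bs\<in>distinct_lists (Basis :: (real^'n) set).
      (\<integral>\<^sup>+ z. ennreal ((norm (complex_of_real (monom_mi \<alpha> z)
        * mpderiv (madd \<beta> (count_list (map axis_index bs))) f z))\<^sup>2) \<partial>lborel))"
proof -
  let ?F = "{g. \<exists>js. g = pdirs js f}"
  let ?D = "\<lambda>b::real^'n. pdir (axis_index b)"
  let ?w = "(monom_mi \<alpha> x)\<^sup>2"
  let ?G = "\<lambda>bs :: (real^'n) list. mpderiv (madd \<beta> (count_list (map axis_index bs))) f"
  define c where "c = (\<lambda>b::real^'n. if 0 \<le> x \<bullet> b then 0 else - 1 :: real)"
  have der: "((\<lambda>t. g (y + t *\<^sub>R b)) has_vector_derivative ?D b g (y + t *\<^sub>R b)) (at t)"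
    if "g \<in> ?F" "b \<in> Basis" for g b y t
    using that has_vector_derivative_pdir[OF smooth_pdirs[OF f]] by (auto simp: Basis_vec_def)
  have closed: "?D b g \<in> ?F" if "g \<in> ?F" for g b
    using that by (auto intro: exI[of _ "_ # _"])
  have cont: "continuous_on UNIV g" if "g \<in> ?F" for g
    using that smooth_imp_continuous_on[OF smooth_pdirs[OF f]] by auto
  have "mpderiv \<beta> f \<in> ?F" unfolding mpderiv_def by auto
  moreover have "c b \<le> 0 \<and> 0 \<le> c b + 1" for b by (simp add: c_def)
  ultimately have "ennreal ((norm (mpderiv \<beta> f x))\<^sup>2) \<le>
      2 ^ card (Basis :: (real^'n) set) * (\<Sum>bs\<in>distinct_lists Basis. cube_sq_integral Basis c x (foldr ?D bs (mpderiv \<beta> f)))"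
    using sq_norm_le_cube_sq_integrals[OF closed cont der _ finite_Basis subset_refl] by blast
  then have sobolev: "ennreal ((norm (mpderiv \<beta> f x))\<^sup>2)
      \<le> 2 ^ CARD('n) * (\<Sum>bs\<in>distinct_lists Basis. cube_sq_integral Basis c x (?G bs))"
    by (simp add: foldr_pdir_axis_index pdirs_mpderiv[OF f])
  have "ennreal ((norm (complex_of_real (monom_mi \<alpha> x) * mpderiv \<beta> f x))\<^sup>2)
      = ennreal ?w * ennreal ((norm (mpderiv \<beta> f x))\<^sup>2)"
    by (simp add: norm_mult power_mult_distrib ennreal_mult)
  also have "\<dots> \<le> ennreal ?w * (2 ^ CARD('n) * (\<Sum>bs\<in>distinct_lists Basis. cube_sq_integral Basis c x (?G bs)))"
    by (rule mult_left_mono[OF sobolev]) simp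
  also have "\<dots> = 2 ^ CARD('n) * (\<Sum>bs\<in>distinct_lists Basis. ennreal ?w * cube_sq_integral Basis c x (?G bs))"
    by (simp add: sum_distrib_left mult.left_commute)
  also have "\<dots> \<le> 2 ^ CARD('n) * (\<Sum>bs\<in>distinct_lists (Basis :: (real^'n) set).
      (\<integral>\<^sup>+ z. ennreal ((norm (complex_of_real (monom_mi \<alpha> z) * ?G bs z))\<^sup>2) \<partial>lborel))"
    by (intro mult_left_mono sum_mono sq_monom_mi_mult_cube_sq_integral_le c_def
        smooth_imp_continuous_on[OF smooth_mpderiv[OF f]]) simp
  finally show ?thesis .
qed

section \<open>Multi-indices\<close>

lemma mabs_madd: "mabs (madd a b) = mabs a + mabs b"
  by (simp add: mabs_def madd_def sum.distrib)

lemma madd_assoc: "madd a (madd b c) = madd (madd a b) c"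
  by (simp add: madd_def add.assoc)

lemma madd_right_commute: "madd (madd a b) c = madd (madd a c) b"
  by (simp add: madd_def ac_simps)

lemma madd_zero: "madd \<gamma> (\<lambda>_. 0) = \<gamma>"
  by (simp add: madd_def)

lemma mabs_eq_0_iff: "mabs (c :: 'n::finite \<Rightarrow> nat) = 0 \<longleftrightarrow> c = (\<lambda>_. 0)"
  unfolding mabs_def by (auto simp: fun_eq_iff)

lemma mabs_unit_mi: "mabs (unit_mi (j :: 'n::finite)) = 1"
  by (simp add: mabs_def unit_mi_def)

lemma mabs_count_list: "mabs (count_list (js :: 'n::finite list)) = length js"
  unfolding mabs_def by (rule sum_count_set) auto

lemma mabs_eq_Suc_imp_madd_unit_mi:
  fixes c :: "'n::finite \<Rightarrow> nat"
  assumes "mabs c = Suc r"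
  obtains c' j where "mabs c' = r" "c = madd c' (unit_mi j)"
proof -
  have "c \<noteq> (\<lambda>_. 0)" using assms by (auto simp: mabs_def)
  then obtain j where j: "c j \<noteq> 0" by auto
  define c' where "c' = (\<lambda>i. if i = j then c i - 1 else c i)"
  have c: "c = madd c' (unit_mi j)" using j by (auto simp: c'_def madd_def unit_mi_def fun_eq_iff)
  then have "mabs c' = r" using assms by (simp add: mabs_madd mabs_unit_mi)
  with c show thesis using that by blast
qed

lemma mabs_count_list_distinct_Basis_le:
  assumes "bs \<in> distinct_lists (Basis :: (real^'n) set)"
  shows "mabs (count_list (map axis_index bs)) \<le> CARD('n)"
proof -
  have "length bs = card (set bs)" using assms by (simp add: distinct_lists_def distinct_card)
  also have "\<dots> \<le> card (Basis :: (real^'n) set)" using assms by (intro card_mono) (auto simp: distinct_lists_def)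
  finally show ?thesis by (simp add: mabs_count_list)
qed

lemma card_distinct_lists_Basis_pos: "0 < card (distinct_lists (Basis :: 'a::euclidean_space set))"
proof -
  have "[] \<in> distinct_lists (Basis :: 'a set)" by (simp add: distinct_lists_def)
  then show ?thesis using finite_distinct_lists[of "Basis :: 'a set"] by (auto simp: card_gt_0_iff)
qed

section \<open>Comparison of the weighted norms\<close>

lemma L2_norm_le_iff:
  assumes "0 \<le> r"
  shows "L2_norm g \<le> ennreal r \<longleftrightarrow> (\<integral>\<^sup>+ x. ennreal ((norm (g x))\<^sup>2) \<partial>lborel) \<le> ennreal (r\<^sup>2)"
proof (cases "\<integral>\<^sup>+ x. ennreal ((norm (g x))\<^sup>2) \<partial>lborel" rule: ennreal_cases)
  case (real s)
  have "sqrt s \<le> r \<longleftrightarrow> s \<le> r\<^sup>2"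
    using assms real_sqrt_le_iff[of s "r\<^sup>2"] by simp
  then show ?thesis using real assms unfolding L2_norm_def by (simp add: Let_def)
qed (simp add: L2_norm_def top_unique)

lemma sup_norm_le: "(\<And>x. norm (g x) \<le> K) \<Longrightarrow> sup_norm g \<le> ennreal K"
  unfolding sup_norm_def by (rule SUP_least) (simp add: ennreal_leI)

lemma norm_le_sup_norm: "ennreal (norm (g x)) \<le> sup_norm g"
  unfolding sup_norm_def by (rule SUP_upper) simp

lemma mult_ennreal_inverse_le_iff:
  assumes "0 < D" "0 \<le> n"
  shows "X * ennreal (1 / D) \<le> ennreal n \<longleftrightarrow> X \<le> ennreal (n * D)"
proof
  assume "X * ennreal (1 / D) \<le> ennreal n"
  then have "X * ennreal (1 / D) * ennreal D \<le> ennreal n * ennreal D" by (rule mult_right_mono) simp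
  then show "X \<le> ennreal (n * D)" using assms by (simp add: mult.assoc ennreal_mult[symmetric])
next
  assume "X \<le> ennreal (n * D)"
  then have "X * ennreal (1 / D) \<le> ennreal (n * D) * ennreal (1 / D)" by (rule mult_right_mono) simp
  then show "X * ennreal (1 / D) \<le> ennreal n" using assms by (simp add: ennreal_mult[symmetric])
qed

lemma weighted_SUP_le_iff:
  fixes N :: "('n::finite \<Rightarrow> nat) \<Rightarrow> ('n \<Rightarrow> nat) \<Rightarrow> ennreal"
  assumes "\<And>\<gamma>. 0 < M \<gamma>" "0 < h" "0 \<le> n"
  shows "(SUP \<alpha>. SUP \<beta>. N \<alpha> \<beta> * ennreal (1 / (h ^ mabs (madd \<alpha> \<beta>) * M (madd \<alpha> \<beta>)))) \<le> ennreal n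
    \<longleftrightarrow> (\<forall>\<alpha> \<beta>. N \<alpha> \<beta> \<le> ennreal (n * (h ^ mabs (madd \<alpha> \<beta>) * M (madd \<alpha> \<beta>))))"
  using assms by (simp add: SUP_le_iff mult_ennreal_inverse_le_iff)

lemma ennreal_le_mult_if_finite_le:
  assumes "0 < C" "\<And>n. 0 \<le> n \<Longrightarrow> Y = ennreal n \<Longrightarrow> X \<le> ennreal (C * n)"
  shows "X \<le> ennreal C * Y"
proof (cases Y rule: ennreal_cases)
  case (real n)
  then show ?thesis using assms by (simp add: ennreal_mult)
qed (use assms in \<open>simp add: ennreal_mult_top\<close>)

lemma norm_monom_mpderiv_le_of_L2_norm_le:
  fixes f :: "real^'n \<Rightarrow> complex"
  assumes f: "smooth f" and E: "0 \<le> E"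
    and L2: "\<And>c. mabs c \<le> CARD('n) \<Longrightarrow>
      L2_norm (\<lambda>z. complex_of_real (monom_mi \<alpha> z) * mpderiv (madd \<beta> c) f z) \<le> ennreal E"
  shows "norm (complex_of_real (monom_mi \<alpha> x) * mpderiv \<beta> f x)
    \<le> sqrt (2 ^ CARD('n) * real (card (distinct_lists (Basis :: (real^'n) set)))) * E"
proof -
  let ?S = "distinct_lists (Basis :: (real^'n) set)"
  define Q where "Q = sqrt (2 ^ CARD('n) * real (card ?S))"
  have Q: "0 < Q" unfolding Q_def using card_distinct_lists_Basis_pos[where 'a="real^'n"] by simp
  have int: "(\<integral>\<^sup>+ z. ennreal ((norm (complex_of_real (monom_mi \<alpha> z)
      * mpderiv (madd \<beta> (count_list (map axis_index bs))) f z))\<^sup>2) \<partial>lborel) \<le> ennreal (E\<^sup>2)"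
    if "bs \<in> ?S" for bs
    using L2[OF mabs_count_list_distinct_Basis_le[OF that]] unfolding L2_norm_le_iff[OF E] .
  have "ennreal ((norm (complex_of_real (monom_mi \<alpha> x) * mpderiv \<beta> f x))\<^sup>2) \<le>
      2 ^ CARD('n) * (\<Sum>bs\<in>?S. ennreal (E\<^sup>2))"
    using sq_norm_monom_mpderiv_le[OF f, of \<alpha> x \<beta>]
    by (rule order_trans) (intro mult_left_mono sum_mono int, auto)
  also have "\<dots> = ennreal ((Q * E)\<^sup>2)"
    unfolding Q_def
    by (simp add: power_mult_distrib ennreal_mult ennreal_power[symmetric] ennreal_of_nat_eq_real_of_nat mult.assoc)
  finally show ?thesis
    using Q E unfolding Q_def[symmetric] by (simp add: ennreal_le_iff power2_le_iff_abs_le)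
qed

lemma wnorm_inf_le_wnorm_2:
  fixes f :: "real^'n \<Rightarrow> complex" and Ms Mt :: "('n \<Rightarrow> nat) \<Rightarrow> real"
  assumes f: "smooth f" and Ms: "\<And>\<delta>. 0 < Ms \<delta>" and Mt: "\<And>\<delta>. 0 < Mt \<delta>"
    and hs: "0 < hs" and ht: "0 < ht" and C: "0 < C"
    and bnd: "\<And>\<gamma> c. mabs c \<le> CARD('n) \<Longrightarrow>
        hs ^ mabs (madd \<gamma> c) * Ms (madd \<gamma> c) \<le> C * (ht ^ mabs \<gamma> * Mt \<gamma>)"
  shows "wnorm_inf Mt ht f
    \<le> ennreal (C * sqrt (2 ^ CARD('n) * real (card (distinct_lists (Basis :: (real^'n) set))))) * wnorm_2 Ms hs f"
proof -
  define Q where "Q = sqrt (2 ^ CARD('n) * real (card (distinct_lists (Basis :: (real^'n) set))))"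
  have Q: "0 < Q" unfolding Q_def using card_distinct_lists_Basis_pos[where 'a="real^'n"] by simp
  have "wnorm_inf Mt ht f \<le> ennreal (C * Q) * wnorm_2 Ms hs f"
  proof (rule ennreal_le_mult_if_finite_le)
    show "0 < C * Q" using C Q by simp
    fix n assume n: "0 \<le> n" "wnorm_2 Ms hs f = ennreal n"
    then have "wnorm_2 Ms hs f \<le> ennreal n" by simp
    then have L2: "\<forall>\<alpha> \<beta>. L2_norm (\<lambda>x. complex_of_real (monom_mi \<alpha> x) * mpderiv \<beta> f x)
        \<le> ennreal (n * (hs ^ mabs (madd \<alpha> \<beta>) * Ms (madd \<alpha> \<beta>)))"
      unfolding wnorm_2_def weighted_SUP_le_iff[of Ms, OF Ms hs n(1)] .
    have "\<forall>\<alpha> \<beta>. sup_norm (\<lambda>x. complex_of_real (monom_mi \<alpha> x) * mpderiv \<beta> f x)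
        \<le> ennreal (C * Q * n * (ht ^ mabs (madd \<alpha> \<beta>) * Mt (madd \<alpha> \<beta>)))"
    proof (intro allI)
      fix \<alpha> \<beta> :: "'n \<Rightarrow> nat"
      define E where "E = n * C * (ht ^ mabs (madd \<alpha> \<beta>) * Mt (madd \<alpha> \<beta>))"
      have E: "0 \<le> E" unfolding E_def using n C ht Mt[of "madd \<alpha> \<beta>"] by simp
      have "L2_norm (\<lambda>z. complex_of_real (monom_mi \<alpha> z) * mpderiv (madd \<beta> c) f z) \<le> ennreal E"
        if "mabs c \<le> CARD('n)" for c
      proof -
        have "n * (hs ^ mabs (madd \<alpha> (madd \<beta> c)) * Ms (madd \<alpha> (madd \<beta> c))) \<le> E"
          using bnd[OF that, of "madd \<alpha> \<beta>"] n(1)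
          unfolding E_def madd_assoc by (simp add: mult.assoc mult_left_mono)
        then show ?thesis using L2 by (meson ennreal_leI order_trans)
      qed
      then have "norm (complex_of_real (monom_mi \<alpha> x) * mpderiv \<beta> f x) \<le> Q * E" for x
        unfolding Q_def by (rule norm_monom_mpderiv_le_of_L2_norm_le[OF f E])
      then show "sup_norm (\<lambda>x. complex_of_real (monom_mi \<alpha> x) * mpderiv \<beta> f x)
          \<le> ennreal (C * Q * n * (ht ^ mabs (madd \<alpha> \<beta>) * Mt (madd \<alpha> \<beta>)))"
        by (intro sup_norm_le) (simp add: E_def ac_simps)
    qed
    then show "wnorm_inf Mt ht f \<le> ennreal (C * Q * n)"
      unfolding wnorm_inf_def by (subst weighted_SUP_le_iff[of Mt, OF Mt ht]) (use C Q n(1) in auto)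
  qed
  then show ?thesis by (simp add: Q_def)
qed

lemma nn_integral_reflect:
  fixes F :: "real \<Rightarrow> ennreal"
  assumes "F \<in> borel_measurable borel"
  shows "(\<integral>\<^sup>+ t. F (- t) \<partial>lborel) = (\<integral>\<^sup>+ t. F t \<partial>lborel)"
proof -
  have "(\<integral>\<^sup>+ t. F t \<partial>lborel) = (\<integral>\<^sup>+ t. F t \<partial>distr lborel borel uminus)"
    by (simp add: lborel_distr_uminus)
  also have "\<dots> = (\<integral>\<^sup>+ t. F (- t) \<partial>lborel)"
    by (rule nn_integral_distr) (use assms in auto)
  finally show ?thesis by simp
qed

lemma nn_integral_inverse_sq_atLeast_1: "(\<integral>\<^sup>+ t. ennreal (1 / t\<^sup>2) * indicator {1..} t \<partial>lborel) = 1"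
proof -
  have "((\<lambda>x::real. 1 / x ^ 2) has_integral 1 / (real (2 - 1) * 1 ^ (2 - 1))) {1..}"
    by (rule has_integral_inverse_power_to_inf) auto
  then show ?thesis by (subst nn_integral_has_integral_lebesgue') auto
qed

lemma nn_integral_inverse_max_1_sq_le: "(\<integral>\<^sup>+ t. ennreal (1 / max 1 (t\<^sup>2)) \<partial>lborel) \<le> 4"
proof -
  let ?a = "\<lambda>t::real. indicator {-1..1} t :: ennreal"
  let ?b = "\<lambda>t::real. ennreal (1 / t\<^sup>2) * indicator {1..} t"
  have mb: "?b \<in> borel_measurable borel" by measurable
  have "ennreal (1 / max 1 (t\<^sup>2)) \<le> ?a t + ?b t + ?b (- t)" for t
  proof (cases "\<bar>t\<bar> \<le> 1")
    case True
    then have "?a t = 1" by (auto simp: abs_le_iff)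
    moreover have "1 / max 1 (t\<^sup>2) \<le> 1" by (simp add: field_simps)
    ultimately show ?thesis by (simp add: ennreal_leI add_increasing2 order_trans[OF ennreal_leI[of _ 1]])
  next
    case False
    then have "max 1 (t\<^sup>2) = t\<^sup>2"
      by (metis abs_le_square_iff abs_one linorder_le_cases max.absorb2 max.orderE one_power2)
    with False show ?thesis by (cases "t \<ge> 1") (auto simp: add_increasing add_increasing2)
  qed
  then have "(\<integral>\<^sup>+ t. ennreal (1 / max 1 (t\<^sup>2)) \<partial>lborel) \<le> (\<integral>\<^sup>+ t. ?a t + ?b t + ?b (- t) \<partial>lborel)"
    by (intro nn_integral_mono)
  also have "\<dots> = (\<integral>\<^sup>+ t. ?a t \<partial>lborel) + (\<integral>\<^sup>+ t. ?b t \<partial>lborel) + (\<integral>\<^sup>+ t. ?b (- t) \<partial>lborel)"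
    using mb by (simp add: nn_integral_add)
  also have "\<dots> = 4"
    using nn_integral_reflect[OF mb] by (simp add: nn_integral_inverse_sq_atLeast_1)
  finally show ?thesis .
qed

lemma nn_integral_prod_inverse_max_1_sq_le:
  "(\<integral>\<^sup>+ x. ennreal (\<Prod>i\<in>UNIV. 1 / max 1 ((x $ i)\<^sup>2)) \<partial>(lborel :: (real^'n) measure)) \<le> 4 ^ CARD('n)"
proof -
  have inj: "inj (\<lambda>i::'n. axis i (1::real))" by (auto simp: inj_def axis_eq_axis)
  have Basis: "(Basis :: (real^'n) set) = range (\<lambda>i. axis i 1)" by (auto simp: Basis_vec_def)
  have "(\<Prod>i\<in>UNIV. 1 / max 1 ((x $ i)\<^sup>2)) = (\<Prod>b\<in>Basis. 1 / max 1 ((x \<bullet> b)\<^sup>2))" for x :: "real^'n"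
    unfolding Basis by (simp add: prod.reindex[OF inj] inner_axis)
  then have "(\<integral>\<^sup>+ x. ennreal (\<Prod>i\<in>UNIV. 1 / max 1 ((x $ i)\<^sup>2)) \<partial>(lborel :: (real^'n) measure))
      = (\<integral>\<^sup>+ x. (\<Prod>b\<in>Basis. ennreal (1 / max 1 ((x \<bullet> b)\<^sup>2))) \<partial>(lborel :: (real^'n) measure))"
    by (simp add: prod_ennreal)
  also have "\<dots> = (\<Prod>b\<in>(Basis :: (real^'n) set). (\<integral>\<^sup>+ t. ennreal (1 / max 1 (t\<^sup>2)) \<partial>lborel))"
    by (rule nn_integral_lborel_prod) auto
  also have "\<dots> \<le> (\<Prod>b\<in>(Basis :: (real^'n) set). 4)"
    by (simp add: power_mono nn_integral_inverse_max_1_sq_le)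
  finally show ?thesis by simp
qed

definition outer_sq_exponent :: "real^'n \<Rightarrow> 'n \<Rightarrow> nat" where
  "outer_sq_exponent x = (\<lambda>i. if 1 < \<bar>x $ i\<bar> then 2 else 0)"

lemma mabs_outer_sq_exponent_le: "mabs (outer_sq_exponent (x :: real^'n::finite)) \<le> 2 * CARD('n)"
proof -
  have "mabs (outer_sq_exponent x) \<le> (\<Sum>i\<in>(UNIV::'n set). 2)"
    unfolding mabs_def outer_sq_exponent_def by (intro sum_mono) auto
  then show ?thesis by simp
qed

lemma monom_mi_madd_outer_sq_exponent:
  "monom_mi (madd \<alpha> (outer_sq_exponent x)) x = monom_mi \<alpha> x * (\<Prod>i\<in>UNIV. max 1 ((x $ i)\<^sup>2))"
proof -
  have "(x $ i) ^ outer_sq_exponent x i = max 1 ((x $ i)\<^sup>2)" for i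
  proof (cases "1 < \<bar>x $ i\<bar>")
    case True
    then have "1 < (x $ i)\<^sup>2" by (metis abs_le_square_iff abs_one linorder_not_le one_power2)
    then show ?thesis using True by (simp add: outer_sq_exponent_def)
  next
    case False
    then have "(x $ i)\<^sup>2 \<le> 1" by (metis abs_le_square_iff abs_one linorder_not_le one_power2)
    then show ?thesis using False by (simp add: outer_sq_exponent_def)
  qed
  then show ?thesis unfolding monom_mi_def madd_def by (simp add: power_add prod.distrib)
qed

lemma L2_norm_le_of_decay:
  fixes g :: "real^'n \<Rightarrow> complex"
  assumes K: "0 \<le> K" and g: "\<And>x. norm (g x) * (\<Prod>i\<in>UNIV. max 1 ((x $ i)\<^sup>2)) \<le> K"
  shows "L2_norm g \<le> ennreal (K * 2 ^ CARD('n))"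
proof -
  let ?W = "\<lambda>x::real^'n. \<Prod>i\<in>UNIV. max 1 ((x $ i)\<^sup>2)"
  let ?P = "\<lambda>x::real^'n. \<Prod>i\<in>UNIV. 1 / max 1 ((x $ i)\<^sup>2)"
  have pt: "(norm (g x))\<^sup>2 \<le> K\<^sup>2 * ?P x" for x
  proof -
    have W: "1 \<le> ?W x" by (rule prod_ge_1) auto
    then have "norm (g x) \<le> K / ?W x" using g[of x] by (simp add: pos_le_divide_eq)
    then have "(norm (g x))\<^sup>2 \<le> (K / ?W x)\<^sup>2" by (rule power_mono) simp
    also have "\<dots> = K\<^sup>2 / (?W x * ?W x)" by (simp add: power_divide power2_eq_square)
    also have "\<dots> \<le> K\<^sup>2 / ?W x" using W by (intro divide_left_mono) simp_all
    finally show ?thesis by (simp add: prod_dividef)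
  qed
  have "(\<integral>\<^sup>+ x. ennreal ((norm (g x))\<^sup>2) \<partial>lborel) \<le> (\<integral>\<^sup>+ x. ennreal (K\<^sup>2) * ennreal (?P x) \<partial>lborel)"
    using pt by (intro nn_integral_mono) (simp add: ennreal_mult[symmetric] prod_nonneg ennreal_leI)
  also have "\<dots> = ennreal (K\<^sup>2) * (\<integral>\<^sup>+ x. ennreal (?P x) \<partial>lborel)"
    by (intro nn_integral_cmult) measurable
  also have "\<dots> \<le> ennreal (K\<^sup>2) * 4 ^ CARD('n)"
    by (rule mult_left_mono[OF nn_integral_prod_inverse_max_1_sq_le]) simp
  also have "\<dots> = ennreal ((K * 2 ^ CARD('n))\<^sup>2)"
  proof -
    have "(4::ennreal) ^ CARD('n) = ennreal ((2 ^ CARD('n))\<^sup>2)"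
      by (simp add: ennreal_power[symmetric] power_mult[symmetric] mult.commute[of _ 2] power_mult)
    then show ?thesis using K by (simp add: power_mult_distrib ennreal_mult)
  qed
  finally show ?thesis
    using K by (subst L2_norm_le_iff) simp_all
qed

lemma wnorm_2_le_wnorm_inf:
  fixes f :: "real^'n \<Rightarrow> complex" and Ms Mt :: "('n \<Rightarrow> nat) \<Rightarrow> real"
  assumes Ms: "\<And>\<delta>. 0 < Ms \<delta>" and Mt: "\<And>\<delta>. 0 < Mt \<delta>"
    and hs: "0 < hs" and ht: "0 < ht" and C: "0 < C"
    and bnd: "\<And>\<gamma> c. mabs c \<le> 2 * CARD('n) \<Longrightarrow>
        hs ^ mabs (madd \<gamma> c) * Ms (madd \<gamma> c) \<le> C * (ht ^ mabs \<gamma> * Mt \<gamma>)"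
  shows "wnorm_2 Mt ht f \<le> ennreal (C * 2 ^ CARD('n)) * wnorm_inf Ms hs f"
proof (rule ennreal_le_mult_if_finite_le)
  show "0 < C * 2 ^ CARD('n)" using C by simp
  fix n assume n: "0 \<le> n" "wnorm_inf Ms hs f = ennreal n"
  then have "wnorm_inf Ms hs f \<le> ennreal n" by simp
  then have sup: "\<forall>\<alpha> \<beta>. sup_norm (\<lambda>x. complex_of_real (monom_mi \<alpha> x) * mpderiv \<beta> f x)
      \<le> ennreal (n * (hs ^ mabs (madd \<alpha> \<beta>) * Ms (madd \<alpha> \<beta>)))"
    unfolding wnorm_inf_def weighted_SUP_le_iff[of Ms, OF Ms hs n(1)] .
  have "\<forall>\<alpha> \<beta>. L2_norm (\<lambda>x. complex_of_real (monom_mi \<alpha> x) * mpderiv \<beta> f x)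
      \<le> ennreal (C * 2 ^ CARD('n) * n * (ht ^ mabs (madd \<alpha> \<beta>) * Mt (madd \<alpha> \<beta>)))"
  proof (intro allI)
    fix \<alpha> \<beta> :: "'n \<Rightarrow> nat"
    let ?\<gamma> = "madd \<alpha> \<beta>"
    define K where "K = n * C * (ht ^ mabs ?\<gamma> * Mt ?\<gamma>)"
    have K: "0 \<le> K" unfolding K_def using n C ht Mt[of ?\<gamma>] by simp
    have "norm (complex_of_real (monom_mi \<alpha> x) * mpderiv \<beta> f x) * (\<Prod>i\<in>UNIV. max 1 ((x $ i)\<^sup>2)) \<le> K" for x
    proof -
      let ?\<alpha>' = "madd \<alpha> (outer_sq_exponent x)"
      have "0 \<le> n * (hs ^ mabs (madd ?\<alpha>' \<beta>) * Ms (madd ?\<alpha>' \<beta>))"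
        using n(1) hs Ms[of "madd ?\<alpha>' \<beta>"] by simp
      then have "norm (complex_of_real (monom_mi ?\<alpha>' x) * mpderiv \<beta> f x)
          \<le> n * (hs ^ mabs (madd ?\<alpha>' \<beta>) * Ms (madd ?\<alpha>' \<beta>))"
        using order_trans[OF norm_le_sup_norm[where x=x] sup[rule_format, of ?\<alpha>' \<beta>]]
        by (simp add: ennreal_le_iff)
      also have "\<dots> \<le> K"
        using mult_left_mono[OF bnd[OF mabs_outer_sq_exponent_le[of x], of ?\<gamma>] n(1)]
        unfolding K_def madd_right_commute[of \<alpha> "outer_sq_exponent x" \<beta>] by (simp add: mult.assoc)
      finally have "norm (complex_of_real (monom_mi ?\<alpha>' x) * mpderiv \<beta> f x) \<le> K" .
      moreover have "0 \<le> (\<Prod>i\<in>UNIV. max 1 ((x $ i)\<^sup>2))" by (intro prod_nonneg) auto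
      ultimately show ?thesis
        unfolding monom_mi_madd_outer_sq_exponent
        by (simp only: norm_mult norm_of_real abs_mult of_real_mult) (simp add: mult_ac)
    qed
    then have "L2_norm (\<lambda>x. complex_of_real (monom_mi \<alpha> x) * mpderiv \<beta> f x) \<le> ennreal (K * 2 ^ CARD('n))"
      by (rule L2_norm_le_of_decay[OF K])
    then show "L2_norm (\<lambda>x. complex_of_real (monom_mi \<alpha> x) * mpderiv \<beta> f x)
        \<le> ennreal (C * 2 ^ CARD('n) * n * (ht ^ mabs ?\<gamma> * Mt ?\<gamma>))"
      by (simp add: K_def ac_simps)
  qed
  then show "wnorm_2 Mt ht f \<le> ennreal (C * 2 ^ CARD('n) * n)"
    unfolding wnorm_2_def by (subst weighted_SUP_le_iff[of Mt, OF Mt ht]) (use C n(1) in auto)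
qed

section \<open>Weight sequences under shifts of the index\<close>

lemma weight_matrix_pos: "weight_matrix M \<Longrightarrow> 0 < l \<Longrightarrow> 0 < M l \<alpha>"
  unfolding weight_matrix_def by blast

lemma weight_matrix_mono: "weight_matrix M \<Longrightarrow> 0 < l \<Longrightarrow> l \<le> k \<Longrightarrow> M l \<alpha> \<le> M k \<alpha>"
  unfolding weight_matrix_def by blast

text \<open>\<open>M'\<close> is dominated by \<open>M\<close> under shifts of the index by at most \<open>r\<close>; condition (B2)/(R2) is the
  case of shifts by unit vectors.\<close>
definition shift_dominated :: "nat \<Rightarrow> real \<Rightarrow> (('n::finite \<Rightarrow> nat) \<Rightarrow> real) \<Rightarrow> (('n \<Rightarrow> nat) \<Rightarrow> real) \<Rightarrow> bool" where
  "shift_dominated r A M' M \<longleftrightarrow> (\<forall>\<gamma> c. mabs c \<le> r \<longrightarrow> M' (madd \<gamma> c) \<le> A ^ (mabs \<gamma> + 1) * M \<gamma>)"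

lemma shift_dominated_0: "(\<And>\<gamma>. M' \<gamma> \<le> M \<gamma>) \<Longrightarrow> shift_dominated 0 1 M' M"
  by (simp add: shift_dominated_def mabs_eq_0_iff madd_zero)

lemma shift_dominated_Suc:
  fixes Ma Mb Mc :: "('n::finite \<Rightarrow> nat) \<Rightarrow> real"
  assumes unit: "\<And>\<alpha> j. Mc (madd \<alpha> (unit_mi j)) \<le> A ^ (mabs \<alpha> + 1) * Mb \<alpha>"
    and r: "shift_dominated r A' Mb Ma"
    and mono: "\<And>\<alpha>. Mc \<alpha> \<le> Mb \<alpha>"
    and A: "1 \<le> A" and A': "1 \<le> A'" and Ma: "\<And>\<alpha>. 0 \<le> Ma \<alpha>"
  shows "shift_dominated (Suc r) (A ^ (r + 1) * A') Mc Ma"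
  unfolding shift_dominated_def
proof (intro allI impI)
  let ?A = "A ^ (r + 1) * A'"
  fix \<gamma> c :: "'n \<Rightarrow> nat" assume c: "mabs c \<le> Suc r"
  show "Mc (madd \<gamma> c) \<le> ?A ^ (mabs \<gamma> + 1) * Ma \<gamma>"
  proof (cases "mabs c \<le> r")
    case True
    have "A' \<le> ?A" using A A' one_le_power[OF A, of "r + 1"] by simp
    have "Mc (madd \<gamma> c) \<le> Mb (madd \<gamma> c)" by (rule mono)
    also have "\<dots> \<le> A' ^ (mabs \<gamma> + 1) * Ma \<gamma>" using r True by (simp add: shift_dominated_def)
    also have "\<dots> \<le> ?A ^ (mabs \<gamma> + 1) * Ma \<gamma>"
      using \<open>A' \<le> ?A\<close> A' Ma by (intro mult_right_mono power_mono) auto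
    finally show ?thesis .
  next
    case False
    with c have "mabs c = Suc r" by simp
    then obtain c' j where c': "mabs c' = r" "c = madd c' (unit_mi j)"
      by (rule mabs_eq_Suc_imp_madd_unit_mi)
    have "Mc (madd \<gamma> c) = Mc (madd (madd \<gamma> c') (unit_mi j))" by (simp add: c' madd_assoc)
    also have "\<dots> \<le> A ^ (mabs (madd \<gamma> c') + 1) * Mb (madd \<gamma> c')" by (rule unit)
    also have "\<dots> \<le> A ^ (mabs (madd \<gamma> c') + 1) * (A' ^ (mabs \<gamma> + 1) * Ma \<gamma>)"
    proof (rule mult_left_mono)
      show "Mb (madd \<gamma> c') \<le> A' ^ (mabs \<gamma> + 1) * Ma \<gamma>"
        using r c'(1) unfolding shift_dominated_def by blast
    qed (use A in simp)
    also have "\<dots> \<le> (A ^ (r + 1)) ^ (mabs \<gamma> + 1) * (A' ^ (mabs \<gamma> + 1) * Ma \<gamma>)"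
    proof (rule mult_right_mono)
      have "mabs (madd \<gamma> c') + 1 \<le> (r + 1) * (mabs \<gamma> + 1)" using c' by (simp add: mabs_madd)
      then show "A ^ (mabs (madd \<gamma> c') + 1) \<le> (A ^ (r + 1)) ^ (mabs \<gamma> + 1)"
        unfolding power_mult[symmetric] using A by (rule power_increasing)
    qed (use A' Ma in simp)
    also have "\<dots> = ?A ^ (mabs \<gamma> + 1) * Ma \<gamma>" by (simp add: power_mult_distrib)
    finally show ?thesis .
  qed
qed

lemma beurling_shift_dominated:
  assumes WM: "weight_matrix M"
    and B2: "\<forall>l>0. \<exists>k. 0 < k \<and> k \<le> l \<and> (\<exists>A\<ge>1. \<forall>\<alpha> j.
        M k (madd \<alpha> (unit_mi j)) \<le> A ^ (mabs \<alpha> + 1) * M l \<alpha>)"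
    and l: "0 < l"
  shows "\<exists>k. 0 < k \<and> k \<le> l \<and> (\<exists>A\<ge>1. shift_dominated r A (M k) (M l))"
proof (induction r)
  case 0
  show ?case using l by (intro exI[of _ l] conjI exI[of _ 1]) (auto intro: shift_dominated_0)
next
  case (Suc r)
  then obtain k1 A' where k1: "0 < k1" "k1 \<le> l" "1 \<le> A'" "shift_dominated r A' (M k1) (M l)"
    by blast
  obtain k2 A where k2: "0 < k2" "k2 \<le> k1" "1 \<le> A"
    and unit: "\<And>\<alpha> j. M k2 (madd \<alpha> (unit_mi j)) \<le> A ^ (mabs \<alpha> + 1) * M k1 \<alpha>"
    using B2 k1(1) by blast
  have "shift_dominated (Suc r) (A ^ (r + 1) * A') (M k2) (M l)"
    using unit k1(4) weight_matrix_mono[OF WM k2(1,2)] k2(3) k1(3) less_imp_le[OF weight_matrix_pos[OF WM l]]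
    by (rule shift_dominated_Suc)
  moreover have "1 \<le> A ^ (r + 1) * A'" using k1(3) one_le_power[OF k2(3)] by (rule mult_ge1_I[rotated])
  ultimately show ?case using k1 k2 by auto
qed

lemma roumieu_shift_dominated:
  assumes WM: "weight_matrix M"
    and R2: "\<forall>l>0. \<exists>k\<ge>l. \<exists>A\<ge>1. \<forall>\<alpha> j. M l (madd \<alpha> (unit_mi j)) \<le> A ^ (mabs \<alpha> + 1) * M k \<alpha>"
    and l: "0 < l"
  shows "\<exists>k\<ge>l. \<exists>A\<ge>1. shift_dominated r A (M l) (M k)"
  using l
proof (induction r arbitrary: l)
  case 0
  show ?case by (intro exI[of _ l] conjI exI[of _ 1]) (auto intro: shift_dominated_0)
next
  case (Suc r l)
  obtain k0 A where k0: "l \<le> k0" "1 \<le> A"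
    and unit: "\<And>\<alpha> j. M l (madd \<alpha> (unit_mi j)) \<le> A ^ (mabs \<alpha> + 1) * M k0 \<alpha>"
    using R2 Suc.prems by blast
  have k0_pos: "0 < k0" using k0 Suc.prems by simp
  then obtain k1 A' where k1: "k0 \<le> k1" "1 \<le> A'" "shift_dominated r A' (M k0) (M k1)"
    using Suc.IH by blast
  have "shift_dominated (Suc r) (A ^ (r + 1) * A') (M l) (M k1)"
    using unit k1(3) weight_matrix_mono[OF WM Suc.prems k0(1)] k0(2) k1(2)
      less_imp_le[OF weight_matrix_pos[OF WM order.strict_trans2[OF k0_pos k1(1)]]]
    by (rule shift_dominated_Suc)
  moreover have "1 \<le> A ^ (r + 1) * A'" using k1(2) one_le_power[OF k0(2)] by (rule mult_ge1_I[rotated])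
  ultimately show ?case using k0(1) k1(1) by (meson order_trans)
qed

text \<open>With \<open>M' \<le> M\<close>, each proper shift gains a factor \<open>h' A \<le> 1\<close>, so no constant is lost; this keeps
  the constant in the Beurling \<open>L\<^sup>2\<close> estimate independent of \<open>\<lambda>\<close> and \<open>h\<close>.\<close>
lemma shift_dominated_imp_weighted_le:
  fixes M M' :: "('n::finite \<Rightarrow> nat) \<Rightarrow> real"
  assumes sd: "shift_dominated r A M' M" and A: "1 \<le> A"
    and mono: "\<And>\<gamma>. M' \<gamma> \<le> M \<gamma>" and M': "\<And>\<gamma>. 0 < M' \<gamma>" and h: "0 < h"
  shows "\<exists>h'>0. \<forall>\<gamma> c. mabs c \<le> r \<longrightarrow> h' ^ mabs (madd \<gamma> c) * M' (madd \<gamma> c) \<le> h ^ mabs \<gamma> * M \<gamma>"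
proof -
  define m where "m = min 1 h"
  define h' where "h' = m / A"
  have m: "0 < m" "m \<le> 1" "m \<le> h" using h by (auto simp: m_def)
  have "h' \<le> m" using m A by (simp add: h'_def divide_le_eq mult_le_cancel_left1)
  then have h': "0 < h'" "h' \<le> 1" "h' \<le> h" "h' * A = m"
    using m A by (simp_all add: h'_def)
  have M: "0 < M \<gamma>" for \<gamma> using M'[of \<gamma>] mono[of \<gamma>] by linarith
  have "h' ^ mabs (madd \<gamma> c) * M' (madd \<gamma> c) \<le> h ^ mabs \<gamma> * M \<gamma>" if c: "mabs c \<le> r" for \<gamma> c
  proof (cases "mabs c = 0")
    case True
    then have "madd \<gamma> c = \<gamma>" by (simp add: mabs_eq_0_iff madd_zero)
    moreover have "h' ^ mabs \<gamma> * M' \<gamma> \<le> h ^ mabs \<gamma> * M \<gamma>"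
      using h' mono[of \<gamma>] M'[of \<gamma>] by (intro mult_mono power_mono) auto
    ultimately show ?thesis by simp
  next
    case False
    have "h' ^ mabs (madd \<gamma> c) * M' (madd \<gamma> c) \<le> h' ^ (mabs \<gamma> + 1) * (A ^ (mabs \<gamma> + 1) * M \<gamma>)"
    proof (rule mult_mono)
      show "h' ^ mabs (madd \<gamma> c) \<le> h' ^ (mabs \<gamma> + 1)"
        using False h' by (intro power_decreasing) (auto simp: mabs_madd)
      show "M' (madd \<gamma> c) \<le> A ^ (mabs \<gamma> + 1) * M \<gamma>"
        using sd c by (simp add: shift_dominated_def)
    qed (use h'(1) M' less_imp_le in auto)
    also have "\<dots> = m ^ (mabs \<gamma> + 1) * M \<gamma>"
      by (simp add: h'(4)[symmetric] power_mult_distrib)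
    also have "\<dots> \<le> h ^ mabs \<gamma> * M \<gamma>"
    proof (rule mult_right_mono)
      have "m ^ (mabs \<gamma> + 1) \<le> m ^ mabs \<gamma>" using m by (intro power_decreasing) auto
      also have "\<dots> \<le> h ^ mabs \<gamma>" using m by (intro power_mono) auto
      finally show "m ^ (mabs \<gamma> + 1) \<le> h ^ mabs \<gamma>" .
    qed (use M less_imp_le in blast)
    finally show ?thesis .
  qed
  then show ?thesis using h'(1) by blast
qed

lemma shift_dominated_imp_weighted_le_const:
  fixes M M' :: "('n::finite \<Rightarrow> nat) \<Rightarrow> real"
  assumes sd: "shift_dominated r A M' M" and A: "1 \<le> A" and M': "\<And>\<gamma>. 0 \<le> M' \<gamma>" and h: "0 < h"
  shows "\<exists>h'>0. \<exists>C>0. \<forall>\<gamma> c. mabs c \<le> r \<longrightarrow>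
    h ^ mabs (madd \<gamma> c) * M' (madd \<gamma> c) \<le> C * (h' ^ mabs \<gamma> * M \<gamma>)"
proof (intro exI conjI allI impI)
  define m where "m = max 1 h"
  have m: "1 \<le> m" "h \<le> m" by (auto simp: m_def)
  show "0 < h * A" "0 < A * m ^ r" using h A m by auto
  fix \<gamma> c :: "'n \<Rightarrow> nat" assume c: "mabs c \<le> r"
  have "h ^ mabs c \<le> m ^ mabs c" using h m by (intro power_mono) auto
  also have "\<dots> \<le> m ^ r" using m c by (intro power_increasing) auto
  finally have hc: "h ^ mabs c \<le> m ^ r" .
  have "h ^ mabs (madd \<gamma> c) * M' (madd \<gamma> c) = h ^ mabs \<gamma> * (h ^ mabs c * M' (madd \<gamma> c))"
    by (simp add: mabs_madd power_add)
  also have "\<dots> \<le> h ^ mabs \<gamma> * (m ^ r * (A ^ (mabs \<gamma> + 1) * M \<gamma>))"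
    using hc sd c h m M'[of "madd \<gamma> c"]
    by (intro mult_left_mono mult_mono) (auto simp: shift_dominated_def)
  also have "\<dots> = A * m ^ r * ((h * A) ^ mabs \<gamma> * M \<gamma>)"
    by (simp add: power_mult_distrib ac_simps)
  finally show "h ^ mabs (madd \<gamma> c) * M' (madd \<gamma> c) \<le> A * m ^ r * ((h * A) ^ mabs \<gamma> * M \<gamma>)" .
qed

section \<open>The Beurling and the Roumieu case\<close>

lemma beurling_wnorm_2_le_wnorm_inf:
  fixes M :: "real \<Rightarrow> ('n::finite \<Rightarrow> nat) \<Rightarrow> real"
  assumes WM: "weight_matrix M"
    and B2: "\<forall>l>0. \<exists>k. 0 < k \<and> k \<le> l \<and> (\<exists>A\<ge>1. \<forall>\<alpha> j.
        M k (madd \<alpha> (unit_mi j)) \<le> A ^ (mabs \<alpha> + 1) * M l \<alpha>)"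
  shows "\<exists>C1>0. \<forall>l>0. \<forall>h>0. \<exists>k>0. \<exists>h'>0. \<forall>f. smooth f \<longrightarrow>
    wnorm_2 (M l) h f \<le> ennreal C1 * wnorm_inf (M k) h' f"
proof -
  have "\<forall>l>0. \<forall>h>0. \<exists>k>0. \<exists>h'>0. \<forall>f. smooth f \<longrightarrow>
      wnorm_2 (M l) h f \<le> ennreal (1 * 2 ^ CARD('n)) * wnorm_inf (M k) h' f"
  proof (intro allI impI)
    fix l h :: real assume l: "0 < l" and h: "0 < h"
    obtain k A where k: "0 < k" "k \<le> l" "1 \<le> A" and sd: "shift_dominated (2 * CARD('n)) A (M k) (M l)"
      using beurling_shift_dominated[OF WM B2 l] by blast
    obtain h' where h': "0 < h'" and bnd: "\<And>\<gamma> c. mabs c \<le> 2 * CARD('n) \<Longrightarrow>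
        h' ^ mabs (madd \<gamma> c) * M k (madd \<gamma> c) \<le> 1 * (h ^ mabs \<gamma> * M l \<gamma>)"
      using shift_dominated_imp_weighted_le[OF sd k(3) weight_matrix_mono[OF WM k(1,2)]
          weight_matrix_pos[OF WM k(1)] h]
      by auto
    show "\<exists>k>0. \<exists>h'>0. \<forall>f. smooth f \<longrightarrow>
        wnorm_2 (M l) h f \<le> ennreal (1 * 2 ^ CARD('n)) * wnorm_inf (M k) h' f"
      using wnorm_2_le_wnorm_inf[OF weight_matrix_pos[OF WM k(1)] weight_matrix_pos[OF WM l] h' h
          zero_less_one bnd] k(1) h' by blast
  qed
  moreover have "(0::real) < 1 * 2 ^ CARD('n)" by simp
  ultimately show ?thesis by blast
qed

lemma beurling_wnorm_inf_le_wnorm_2: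
  fixes M :: "real \<Rightarrow> ('n::finite \<Rightarrow> nat) \<Rightarrow> real"
  assumes WM: "weight_matrix M"
    and B2: "\<forall>l>0. \<exists>k. 0 < k \<and> k \<le> l \<and> (\<exists>A\<ge>1. \<forall>\<alpha> j.
        M k (madd \<alpha> (unit_mi j)) \<le> A ^ (mabs \<alpha> + 1) * M l \<alpha>)"
  shows "\<forall>l>0. \<forall>h>0. \<exists>k'>0. \<exists>C>0. \<exists>h'>0. \<forall>f. smooth f \<longrightarrow>
    wnorm_inf (M l) h f \<le> ennreal C * wnorm_2 (M k') h' f"
proof (intro allI impI)
  fix l h :: real assume l: "0 < l" and h: "0 < h"
  let ?C = "1 * sqrt (2 ^ CARD('n) * real (card (distinct_lists (Basis :: (real^'n) set))))"
  have C: "0 < ?C" using card_distinct_lists_Basis_pos[where 'a="real^'n"] by simp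
  obtain k A where k: "0 < k" "k \<le> l" "1 \<le> A" and sd: "shift_dominated CARD('n) A (M k) (M l)"
    using beurling_shift_dominated[OF WM B2 l] by blast
  obtain h' where h': "0 < h'"
    and bnd: "\<And>\<gamma> c. mabs c \<le> CARD('n) \<Longrightarrow> h' ^ mabs (madd \<gamma> c) * M k (madd \<gamma> c) \<le> 1 * (h ^ mabs \<gamma> * M l \<gamma>)"
    using shift_dominated_imp_weighted_le[OF sd k(3) weight_matrix_mono[OF WM k(1,2)] weight_matrix_pos[OF WM k(1)] h]
    by auto
  show "\<exists>k'>0. \<exists>C>0. \<exists>h'>0. \<forall>f. smooth f \<longrightarrow> wnorm_inf (M l) h f \<le> ennreal C * wnorm_2 (M k') h' f"
    using wnorm_inf_le_wnorm_2[OF _ weight_matrix_pos[OF WM k(1)] weight_matrix_pos[OF WM l] h' h zero_less_one bnd]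
      k(1) C h' by blast
qed

lemma roumieu_wnorm_2_le_wnorm_inf:
  fixes M :: "real \<Rightarrow> ('n::finite \<Rightarrow> nat) \<Rightarrow> real"
  assumes WM: "weight_matrix M"
    and R2: "\<forall>l>0. \<exists>k\<ge>l. \<exists>A\<ge>1. \<forall>\<alpha> j. M l (madd \<alpha> (unit_mi j)) \<le> A ^ (mabs \<alpha> + 1) * M k \<alpha>"
  shows "\<forall>l>0. \<forall>h>0. \<exists>C>0. \<exists>k\<ge>l. \<exists>h'>0. \<forall>f. smooth f \<longrightarrow>
    wnorm_2 (M k) h' f \<le> ennreal C * wnorm_inf (M l) h f"
proof (intro allI impI)
  fix l h :: real assume l: "0 < l" and h: "0 < h"
  obtain k A where k: "l \<le> k" "1 \<le> A" and sd: "shift_dominated (2 * CARD('n)) A (M l) (M k)"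
    using roumieu_shift_dominated[OF WM R2 l] by blast
  obtain h' C where h': "0 < h'" and C: "0 < C"
    and bnd: "\<And>\<gamma> c. mabs c \<le> 2 * CARD('n) \<Longrightarrow> h ^ mabs (madd \<gamma> c) * M l (madd \<gamma> c) \<le> C * (h' ^ mabs \<gamma> * M k \<gamma>)"
    using shift_dominated_imp_weighted_le_const[OF sd k(2) less_imp_le[OF weight_matrix_pos[OF WM l]] h]
    by auto
  have k_pos: "0 < k" using k l by simp
  show "\<exists>C>0. \<exists>k\<ge>l. \<exists>h'>0. \<forall>f. smooth f \<longrightarrow> wnorm_2 (M k) h' f \<le> ennreal C * wnorm_inf (M l) h f"
    using wnorm_2_le_wnorm_inf[OF weight_matrix_pos[OF WM l] weight_matrix_pos[OF WM k_pos] h h' C bnd]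
      k(1) C h' by (metis zero_less_numeral zero_less_power mult_pos_pos)
qed

lemma roumieu_wnorm_inf_le_wnorm_2:
  fixes M :: "real \<Rightarrow> ('n::finite \<Rightarrow> nat) \<Rightarrow> real"
  assumes WM: "weight_matrix M"
    and R2: "\<forall>l>0. \<exists>k\<ge>l. \<exists>A\<ge>1. \<forall>\<alpha> j. M l (madd \<alpha> (unit_mi j)) \<le> A ^ (mabs \<alpha> + 1) * M k \<alpha>"
  shows "\<forall>l>0. \<forall>h>0. \<exists>C>0. \<exists>k'>0. \<exists>h'>0. \<forall>f. smooth f \<longrightarrow>
    wnorm_inf (M k') h' f \<le> ennreal C * wnorm_2 (M l) h f"
proof (intro allI impI)
  fix l h :: real assume l: "0 < l" and h: "0 < h"
  obtain k A where k: "l \<le> k" "1 \<le> A" and sd: "shift_dominated CARD('n) A (M l) (M k)"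
    using roumieu_shift_dominated[OF WM R2 l] by blast
  obtain h' C where h': "0 < h'" and C: "0 < C"
    and bnd: "\<And>\<gamma> c. mabs c \<le> CARD('n) \<Longrightarrow> h ^ mabs (madd \<gamma> c) * M l (madd \<gamma> c) \<le> C * (h' ^ mabs \<gamma> * M k \<gamma>)"
    using shift_dominated_imp_weighted_le_const[OF sd k(2) less_imp_le[OF weight_matrix_pos[OF WM l]] h]
    by auto
  have k_pos: "0 < k" using k l by simp
  have "0 < C * sqrt (2 ^ CARD('n) * real (card (distinct_lists (Basis :: (real^'n) set))))"
    using C card_distinct_lists_Basis_pos[where 'a="real^'n"] by simp
  then show "\<exists>C>0. \<exists>k'>0. \<exists>h'>0. \<forall>f. smooth f \<longrightarrow> wnorm_inf (M k') h' f \<le> ennreal C * wnorm_2 (M l) h f"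
    using wnorm_inf_le_wnorm_2[OF _ weight_matrix_pos[OF WM l] weight_matrix_pos[OF WM k_pos] h h' C bnd]
      k_pos h' by blast
qed

theorem proposition3p4:
  fixes M :: "real \<Rightarrow> ('n::finite \<Rightarrow> nat) \<Rightarrow> real"
  assumes WM: "weight_matrix M"
  shows
  "((\<forall>l>0. \<exists>k. 0 < k \<and> k \<le> l \<and> (\<exists>H>0. \<forall>C>0. \<exists>B>0. \<forall>\<alpha> \<beta>.
        mi_halfpow \<alpha> * M k \<beta> \<le> B * C ^ mabs \<alpha> * H ^ mabs (madd \<alpha> \<beta>) * M l (madd \<alpha> \<beta>))) \<and>
    (\<forall>l>0. \<exists>k. 0 < k \<and> k \<le> l \<and> (\<exists>A\<ge>1. \<forall>\<alpha> j.
        M k (madd \<alpha> (unit_mi j)) \<le> A ^ (mabs \<alpha> + 1) * M l \<alpha>))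
   \<longrightarrow>
    (\<exists>C1>0. \<forall>l>0. \<forall>h>0. \<exists>k>0. \<exists>h'>0. \<forall>f. smooth f \<longrightarrow>
        wnorm_2 (M l) h f \<le> ennreal C1 * wnorm_inf (M k) h' f) \<and>
    (\<forall>l>0. \<forall>h>0. \<exists>k'>0. \<exists>C>0. \<exists>h'>0. \<forall>f. smooth f \<longrightarrow>
        wnorm_inf (M l) h f \<le> ennreal C * wnorm_2 (M k') h' f))
  \<and>
   ((\<forall>l>0. \<exists>k\<ge>l. \<exists>B>0. \<exists>C>0. \<exists>H>0. \<forall>\<alpha> \<beta>.
        mi_halfpow \<alpha> * M l \<beta> \<le> B * C ^ mabs \<alpha> * H ^ mabs (madd \<alpha> \<beta>) * M k (madd \<alpha> \<beta>)) \<and>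
    (\<forall>l>0. \<exists>k\<ge>l. \<exists>A\<ge>1. \<forall>\<alpha> j.
        M l (madd \<alpha> (unit_mi j)) \<le> A ^ (mabs \<alpha> + 1) * M k \<alpha>)
   \<longrightarrow>
    (\<forall>l>0. \<forall>h>0. \<exists>C>0. \<exists>k\<ge>l. \<exists>h'>0. \<forall>f. smooth f \<longrightarrow>
        wnorm_2 (M k) h' f \<le> ennreal C * wnorm_inf (M l) h f) \<and>
    (\<forall>l>0. \<forall>h>0. \<exists>C>0. \<exists>k'>0. \<exists>h'>0. \<forall>f. smooth f \<longrightarrow>
        wnorm_inf (M k') h' f \<le> ennreal C * wnorm_2 (M l) h f))"
  by (intro conjI impI; elim conjE;
      rule beurling_wnorm_2_le_wnorm_inf beurling_wnorm_inf_le_wnorm_2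
        roumieu_wnorm_2_le_wnorm_inf roumieu_wnorm_inf_le_wnorm_2;
      (rule WM | assumption))

end
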